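(* Let $\Omega_{1/2}=\{\operatorname{Re}(s)>\tfrac12\}\setminus[\tfrac12,1]$. The following are equivalent: (1) The Riemann hypothesis holds, i.e. $\zeta(s)\ne0$ for $\operatorname{Re}(s)>\tfrac12$. (2) For every arithmetical list $M\subset\mathbb{P}$, the function $\frac{d}{ds}\eta_M(s)$ extends analytically to $\Omega_{1/2}$. (3) The function $s\mapsto\int_2^{\infty}\frac{\pi(t)\ln t}{t^{s+1}}\,dt$ (defined for $\operatorname{Re}(s)>1$) extends to an analytic function on $\Omega_{1/2}$.
   Context: Let $p_1=2<p_2=3<\dots$ be the primes in increasing order, $\mathbb{P}$ the set of primes, and $\pi(t)$ the number of primes $\le t$. An arithmetical list of reason $r\ge1$ is a set $M=\{p_{r_0+jr}:j\ge0\}$ for some integer $1\le r_0\le r$. $\eta_M(s)=\sum_{p\in M}p^{-s}$ for $\operatorname{Re}(s)>1$. Extension means agreement with the given function on $\{\operatorname{Re}(s)>1\}$. *)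

theory Defs
  imports "HOL-Complex_Analysis.Complex_Analysis" "HOL-Computational_Algebra.Primes"
    "HOL-Library.Infinite_Set"
begin

text \<open>The k-th prime, 1-indexed: p_1 = 2, p_2 = 3, ...\<close>
definition nth_prime1 :: "nat \<Rightarrow> nat" where
  "nth_prime1 k = enumerate {p::nat. prime p} (k - 1)"

definition arith_list :: "nat \<Rightarrow> nat \<Rightarrow> nat set" where
  "arith_list r r0 = {nth_prime1 (r0 + j * r) | j. True}"

definition is_arith_list :: "nat set \<Rightarrow> bool" where
  "is_arith_list M \<longleftrightarrow> (\<exists>r r0. 1 \<le> r \<and> 1 \<le> r0 \<and> r0 \<le> r \<and> M = arith_list r r0)"

text \<open>eta_M(s) = sum over p in M of p^(-s) (meaningful for Re s > 1).\<close>
definition eta_M :: "nat set \<Rightarrow> complex \<Rightarrow> complex" where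
  "eta_M M s = (\<Sum>\<^sub>\<infinity>p\<in>M. of_nat p powr (- s))"

definition prime_pi :: "real \<Rightarrow> nat" where
  "prime_pi t = card {p::nat. prime p \<and> real p \<le> t}"

text \<open>The Riemann zeta function on Re s > 0, s \<noteq> 1, as the (unique) analytic
  continuation of the Dirichlet series sum n^(-s) from Re s > 1.\<close>
definition riemann_zeta :: "complex \<Rightarrow> complex" where
  "riemann_zeta = (SOME f. f holomorphic_on ({s. Re s > 0} - {1}) \<and>
      (\<forall>s. Re s > 1 \<longrightarrow> f s = (\<Sum>n. of_nat (Suc n) powr (- s))))"

definition Omega_half :: "complex set" where
  "Omega_half = {s. Re s > 1/2} - complex_of_real ` {1/2..1}"

end

theory Submission
  imports Defs "HOL-Number_Theory.Prime_Powers" "HOL-Real_Asymp.Real_Asymp"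
begin

text \<open>Let \<open>P(s) = \<Sum>\<^sub>p p\<^sup>-\<^sup>s\<close> and \<open>Q(s) = -P'(s) = \<Sum>\<^sub>p ln p p\<^sup>-\<^sup>s\<close> (\<open>prime_zeta\<close>,
  \<open>prime_log_zeta\<close>). Expanding the von Mangoldt function over prime powers gives
  \<open>-\<zeta>'/\<zeta> = Q + R\<close> on \<open>Re s > 1\<close>, where \<open>R\<close> (\<open>prime_power_log_zeta\<close>) collects the prime powers
  \<open>p\<^sup>k\<close> with \<open>k \<ge> 2\<close> and is holomorphic on \<open>Re s > 1/2\<close>. Hence if \<open>\<zeta>\<close> has no zeros with
  \<open>Re s > 1/2\<close>, then \<open>Q\<close> extends to \<open>\<Omega>\<^sub>1\<^sub>/\<^sub>2\<close>. Conversely, if \<open>Q\<close> extends, then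
  \<open>\<zeta>' + (Q + R) \<zeta> = 0\<close> on \<open>\<Omega>\<^sub>1\<^sub>/\<^sub>2\<close>, so \<open>\<zeta> exp(\<integral>(Q + R))\<close> is constant and \<open>\<zeta>\<close> has no zeros
  there, while on the remaining segment \<open>(1/2, 1)\<close> the continuation of \<open>\<zeta>\<close> is negative.

  The other two conditions are equivalent to the extendability of \<open>Q\<close> as well: for an arithmetical
  list \<open>M\<close> of reason \<open>r\<close>, \<open>r \<eta>\<^sub>M' + Q\<close> extends holomorphically to \<open>Re s > 1/2\<close>, and by Abel
  summation the integral equals \<open>P(s)/s\<^sup>2 + Q(s)/s\<close>.\<close>

lemma holomorphic_on_suminf_local:
  fixes f :: "nat \<Rightarrow> complex \<Rightarrow> complex"
  assumes S: "open S" and hol: "\<And>n. f n holomorphic_on S"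
    and bound: "\<And>x. x \<in> S \<Longrightarrow> \<exists>d h. 0 < d \<and> summable h \<and> (\<forall>n. \<forall>y\<in>ball x d \<inter> S. norm (f n y) \<le> h n)"
  shows "(\<lambda>x. \<Sum>n. f n x) holomorphic_on S" and "\<And>x. x \<in> S \<Longrightarrow> summable (\<lambda>n. f n x)"
proof -
  have to_g: "\<exists>d h. 0 < d \<and> summable h \<and> (\<forall>\<^sub>F n in sequentially. \<forall>y\<in>ball x d \<inter> S. norm (f n y) \<le> h n)"
    if x: "x \<in> S" for x
  proof -
    obtain d h where "0 < d" "summable h" "\<forall>n. \<forall>y\<in>ball x d \<inter> S. norm (f n y) \<le> h n"
      using bound[OF x] by blast
    then show ?thesis by (intro exI[of _ d] exI[of _ h]) (auto intro: always_eventually)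
  qed
  obtain g g' where gg: "\<forall>x \<in> S. ((\<lambda>n. f n x) sums g x) \<and> ((\<lambda>n. deriv (f n) x) sums g' x) \<and>
      (g has_field_derivative g' x) (at x)"
    using series_and_derivative_comparison_local[OF S holomorphic_derivI[OF hol S] to_g] by blast
  show "(\<lambda>x. \<Sum>n. f n x) holomorphic_on S"
    unfolding holomorphic_on_open[OF S]
  proof
    fix x assume x: "x \<in> S"
    have "(g has_field_derivative g' x) (at x)" using gg x by blast
    then have "((\<lambda>x. \<Sum>n. f n x) has_field_derivative g' x) (at x)"
      by (rule has_field_derivative_transform_within_open[OF _ S x]) (use gg sums_unique in auto)
    then show "\<exists>f'. ((\<lambda>x. \<Sum>n. f n x) has_field_derivative f') (at x)" ..
  qed
  show "\<And>x. x \<in> S \<Longrightarrow> summable (\<lambda>n. f n x)" using gg sums_summable by blast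
qed

lemma norm_Taylor_unit_interval:
  fixes f :: "nat \<Rightarrow> complex \<Rightarrow> complex" and m :: real
  assumes der: "\<And>i t. i \<le> n \<Longrightarrow> m \<le> t \<Longrightarrow> t \<le> m + 1 \<Longrightarrow>
                  (f i has_field_derivative f (Suc i) (of_real t)) (at (of_real t))"
    and bound: "\<And>t. m \<le> t \<Longrightarrow> t \<le> m + 1 \<Longrightarrow> norm (f (Suc n) (of_real t)) \<le> B"
  shows "norm (f 0 (of_real (m + 1)) - (\<Sum>i\<le>n. f i (of_real m) / fact i)) \<le> B / fact n"
proof -
  define S where "S = closed_segment (of_real m) (of_real (m + 1) :: complex)"
  have S: "z \<in> S \<longleftrightarrow> (\<exists>t. z = of_real t \<and> m \<le> t \<and> t \<le> m + 1)" for z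
    unfolding S_def closed_segment_of_real by (auto simp: closed_segment_eq_real_ivl)
  have "norm (f 0 (of_real (m + 1)) - (\<Sum>i\<le>n. f i (of_real m) * (of_real (m + 1) - of_real m) ^ i / fact i))
          \<le> B * norm (of_real (m + 1) - of_real m :: complex) ^ Suc n / fact n"
  proof (rule complex_Taylor)
    show "(f i has_field_derivative f (Suc i) z) (at z within S)" if "z \<in> S" "i \<le> n" for i z
      using that der by (auto simp: S intro: has_field_derivative_at_within)
    show "norm (f (Suc n) z) \<le> B" if "z \<in> S" for z
      using that bound by (auto simp: S)
  qed (auto simp: S_def)
  then show ?thesis by simp
qed

lemma starlike_holomorphic_primitive:
  assumes "open S" "starlike S" "g holomorphic_on S"
  obtains E where "\<And>z. z \<in> S \<Longrightarrow> (E has_field_derivative g z) (at z)"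
proof -
  have "\<exists>E. \<forall>z\<in>S. (E has_field_derivative g z) (at z)"
    by (rule holomorphic_starlike_primitive[OF holomorphic_on_imp_continuous_on[OF assms(3)] assms(2,1),
        of "{}"]) (use assms in \<open>auto simp: holomorphic_on_open field_differentiable_def\<close>)
  then show ?thesis using that by blast
qed

lemma holomorphic_primitive_extension:
  assumes S: "open S" "starlike S" and g: "g holomorphic_on S"
    and U: "open U" "connected U" "U \<subseteq> S"
    and F: "\<And>z. z \<in> U \<Longrightarrow> (F has_field_derivative g z) (at z)"
  shows "\<exists>G. G holomorphic_on S \<and> (\<forall>z\<in>U. G z = F z)"
proof -
  obtain E where E: "\<And>z. z \<in> S \<Longrightarrow> (E has_field_derivative g z) (at z)"
    using starlike_holomorphic_primitive[OF S g] by blast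
  have D: "((\<lambda>z. E z - F z) has_field_derivative 0) (at z)" if "z \<in> U" for z
    using DERIV_diff[OF E F[OF that]] that U(3) by auto
  then have "continuous_on U (\<lambda>z. E z - F z)"
    by (intro continuous_at_imp_continuous_on ballI DERIV_isCont) blast
  then obtain c where c: "\<And>z. z \<in> U \<Longrightarrow> E z - F z = c"
    by (rule DERIV_zero_connected_constant[OF U(2,1) finite.emptyI]) (use D in auto)
  have "E holomorphic_on S"
    unfolding holomorphic_on_open[OF S(1)] using E by blast
  then have "(\<lambda>z. E z - c) holomorphic_on S" by (intro holomorphic_intros)
  then show ?thesis using c by (intro exI[of _ "\<lambda>z. E z - c"]) (auto simp: algebra_simps)
qed

text \<open>If \<open>f' = - Z f\<close> with \<open>Z\<close> holomorphic, then \<open>f exp(\<integral>Z)\<close> is constant.\<close>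

lemma holomorphic_linear_ode_nonzero:
  assumes S: "open S" "starlike S" and f: "f holomorphic_on S" and Z: "Z holomorphic_on S"
    and ode: "\<And>z. z \<in> S \<Longrightarrow> deriv f z + Z z * f z = 0"
    and a: "a \<in> S" "f a \<noteq> 0" and z: "z \<in> S"
  shows "f z \<noteq> 0"
proof -
  obtain E where E: "\<And>z. z \<in> S \<Longrightarrow> (E has_field_derivative Z z) (at z)"
    using starlike_holomorphic_primitive[OF S Z] by blast
  have D: "((\<lambda>z. f z * exp (E z)) has_field_derivative 0) (at z)" if "z \<in> S" for z
  proof -
    have "((\<lambda>z. f z * exp (E z)) has_field_derivative
        deriv f z * exp (E z) + exp (E z) * Z z * f z) (at z)"
      using holomorphic_derivI[OF f S(1) that, where T = UNIV] DERIV_chain2[OF DERIV_exp E[OF that]]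
      by (rule DERIV_mult)
    also have "deriv f z * exp (E z) + exp (E z) * Z z * f z = (deriv f z + Z z * f z) * exp (E z)"
      by (simp add: algebra_simps)
    finally show ?thesis using ode[OF that] by simp
  qed
  then have "continuous_on S (\<lambda>z. f z * exp (E z))"
    by (intro continuous_at_imp_continuous_on ballI DERIV_isCont) blast
  then obtain c where c: "\<And>z. z \<in> S \<Longrightarrow> f z * exp (E z) = c"
    by (rule DERIV_zero_connected_constant[OF starlike_imp_connected[OF S(2)] S(1) finite.emptyI])
       (use D in auto)
  have "c \<noteq> 0" using c[OF a(1)] a(2) by auto
  then show ?thesis using c[OF z] by auto
qed

lemma range_Suc_nat: "range Suc = {1::nat..}"
  by (auto simp: image_iff dest: Suc_le_D)

lemma abs_summable_on_atLeast_1: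
  fixes f :: "nat \<Rightarrow> 'a::banach"
  assumes "summable (\<lambda>n. norm (f (Suc n)))"
  shows "(\<lambda>n. norm (f n)) summable_on {1..}"
proof -
  have "((\<lambda>n. norm (f n)) \<circ> Suc) summable_on UNIV"
    using assms by (simp add: o_def norm_summable_imp_summable_on)
  then show ?thesis
    unfolding range_Suc_nat[symmetric] by (subst summable_on_reindex) auto
qed

lemma has_sum_atLeast_1:
  fixes f :: "nat \<Rightarrow> 'a::banach"
  assumes "summable (\<lambda>n. norm (f (Suc n)))"
  shows "(f has_sum (\<Sum>n. f (Suc n))) {1..}"
proof -
  have "((\<lambda>n. f (Suc n)) has_sum (\<Sum>n. f (Suc n))) UNIV"
    using assms by (intro norm_summable_imp_has_sum summable_sums[OF summable_norm_cancel])
  then show ?thesis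
    using has_sum_reindex_bij_betw[of Suc UNIV "{1..}" f] bij_betw_imageI[of Suc UNIV]
    by (simp add: range_Suc_nat)
qed

lemma has_sum_mult_Times:
  fixes a b :: "'i \<Rightarrow> 'a::{real_normed_field, banach, second_countable_topology}"
  assumes a: "(\<lambda>x. norm (a x)) summable_on A" and b: "(\<lambda>y. norm (b y)) summable_on B"
  shows "((\<lambda>(x, y). a x * b y) has_sum (infsum a A * infsum b B)) (A \<times> B)"
proof -
  have "(\<lambda>z. norm ((\<lambda>(x, y). a x * b y) z)) summable_on (A \<times> B)"
  proof (subst Infinite_Sum.abs_summable_on_Sigma_iff, intro conjI ballI)
    show "(\<lambda>y. norm (case (x, y) of (x, y) \<Rightarrow> a x * b y)) summable_on B" for x
      using summable_on_cmult_right[OF b, of "norm (a x)"] by (simp add: norm_mult)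
    have "(\<lambda>x. norm (a x) * infsum (\<lambda>y. norm (b y)) B) summable_on A"
      by (rule summable_on_cmult_left[OF a])
    moreover have "infsum (\<lambda>y. norm (a x * b y)) B = norm (a x) * infsum (\<lambda>y. norm (b y)) B" for x
      by (simp add: norm_mult infsum_cmult_right')
    moreover have "infsum (\<lambda>y. norm (b y)) B \<ge> 0" by (rule infsum_nonneg) simp
    ultimately show "(\<lambda>x. norm (infsum (\<lambda>y. norm (case (x, y) of (x, y) \<Rightarrow> a x * b y)) B)) summable_on A"
      by (simp add: abs_mult)
  qed
  then have sum: "(\<lambda>(x, y). a x * b y) summable_on (A \<times> B)" by (rule abs_summable_summable)
  have "infsum (\<lambda>(x, y). a x * b y) (A \<times> B) = infsum (\<lambda>x. infsum (\<lambda>y. a x * b y) B) A"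
    using infsum_Sigma_banach[of "\<lambda>(x, y). a x * b y" A "\<lambda>_. B"] sum by simp
  also have "\<dots> = infsum a A * infsum b B"
    by (simp add: infsum_cmult_right' infsum_cmult_left')
  finally show ?thesis using sum by (metis has_sum_infsum)
qed

lemma has_sum_geometric_Suc:
  fixes z :: "'a::{real_normed_field, banach}"
  assumes "norm z < 1"
  shows "((\<lambda>k. z ^ Suc k) has_sum z / (1 - z)) UNIV"
proof -
  have "(\<lambda>k. z * z ^ k) sums (z * (1 / (1 - z)))"
    by (rule sums_mult[OF geometric_sums[OF assms]])
  moreover have "summable (\<lambda>k. norm z * norm z ^ k)"
    using assms by (intro summable_mult summable_geometric) simp
  ultimately show ?thesis
    by (intro norm_summable_imp_has_sum) (simp_all add: norm_mult norm_power)
qed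

lemma has_sum_divisor_pairs_iff:
  "((\<lambda>(d, m). f d m) has_sum S) ({1..} \<times> {1::nat..}) \<longleftrightarrow>
   ((\<lambda>(n, d). f d (n div d)) has_sum S) (SIGMA n:{1..}. {d. d dvd n})"
  by (rule has_sum_reindex_bij_witness[where j = "\<lambda>(d, m). (d * m, d)" and i = "\<lambda>(n, d). (d, n div d)"])
     (auto simp: Suc_le_eq dvd_div_eq_0_iff dest: dvd_imp_le intro!: Nat.gr0I)

lemma norm_diff_le_sum_Suc:
  fixes f :: "nat \<Rightarrow> 'a::real_normed_vector"
  assumes "u \<le> v"
  shows "norm (f u - f v) \<le> (\<Sum>m = u..<v. norm (f m - f (Suc m)))"
proof -
  have "norm (f u - f v) = norm (\<Sum>m = u..<v. f (Suc m) - f m)"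
    using sum_Suc_diff'[OF assms, of f] by (simp add: norm_minus_commute)
  also have "\<dots> \<le> (\<Sum>m = u..<v. norm (f m - f (Suc m)))"
    using norm_sum[of "\<lambda>m. f (Suc m) - f m"] by (simp add: norm_minus_commute)
  finally show ?thesis .
qed

lemma sum_atLeastLessThan_concat_mono:
  fixes c :: "nat \<Rightarrow> nat" and f :: "nat \<Rightarrow> 'a::comm_monoid_add"
  assumes "mono c"
  shows "(\<Sum>j\<le>N. \<Sum>m = c j..<c (Suc j). f m) = (\<Sum>m = c 0..<c (Suc N). f m)"
proof (induction N)
  case (Suc N)
  have "c 0 \<le> c (Suc N)" "c (Suc N) \<le> c (Suc (Suc N))"
    using assms by (auto simp: mono_def)
  then show ?case using Suc by (simp add: sum.atLeastLessThan_concat)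
qed simp

section \<open>Dirichlet series over sequences of integers\<close>

definition npowr :: "nat \<Rightarrow> complex \<Rightarrow> complex" where
  "npowr n s = of_nat n powr - s"

definition log_npowr :: "nat \<Rightarrow> complex \<Rightarrow> complex" where
  "log_npowr n s = of_real (ln (real n)) * npowr n s"

lemma norm_npowr: "norm (npowr n s) = real n powr - Re s"
  unfolding npowr_def by (subst norm_powr_real_powr) auto

lemma norm_log_npowr: "n > 0 \<Longrightarrow> norm (log_npowr n s) = ln (real n) * real n powr - Re s"
  by (simp add: log_npowr_def norm_mult norm_npowr)

lemma npowr_mult: "npowr (m * n) s = npowr m s * npowr n s"
  unfolding npowr_def by (simp add: powr_times_real)

lemma npowr_power: "npowr (p ^ k) s = npowr p s ^ k"
proof (induction k)
  case 0
  then show ?case by (simp add: npowr_def)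
next
  case (Suc k)
  then show ?case by (simp add: npowr_mult)
qed

lemma of_nat_powr_of_real: "(of_nat k :: complex) powr of_real c = of_real (real k powr c)"
  by (metis of_real_of_nat_eq powr_of_real of_nat_0_le_iff)

lemma npowr_of_real: "npowr n (of_real c) = of_real (real n powr - c)"
  using of_nat_powr_of_real[of n "- c"] by (simp add: npowr_def)

lemma has_field_derivative_npowr:
  assumes "n > 0"
  shows "((\<lambda>s. npowr n s) has_field_derivative - log_npowr n s) (at s)"
proof -
  have "((\<lambda>s. of_nat n powr - s) has_field_derivative Ln (of_nat n) * of_nat n powr - s * - 1) (at s)"
    using assms by (intro DERIV_chain2[OF has_field_derivative_powr_right]) (auto intro!: derivative_eq_intros)
  then show ?thesis using assms by (simp add: npowr_def log_npowr_def)
qed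

lemma summable_powr_of_Suc_le:
  assumes x: "\<And>n. Suc n \<le> x n" and b: "b > 1"
  shows "summable (\<lambda>n. real (x n) powr - b)"
proof (rule summable_comparison_test')
  show "summable (\<lambda>n. real (Suc n) powr - b)"
    using b summable_real_powr_iff[of "- b"] summable_Suc_iff[of "\<lambda>n. real n powr - b"] by simp
  show "norm (real (x n) powr - b) \<le> real (Suc n) powr - b" for n
    using b x[of n] by (auto intro!: powr_mono2')
qed

lemma summable_ln_powr_of_Suc_le:
  assumes x: "\<And>n. Suc n \<le> x n" and b: "b > 1"
  shows "summable (\<lambda>n. ln (real (x n)) * real (x n) powr - b)"
proof -
  define e where "e = (b - 1) / 2"
  have e: "e > 0" "b - e > 1" using b by (auto simp: e_def field_simps)
  show ?thesis
  proof (rule summable_comparison_test')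
    show "summable (\<lambda>n. real (x n) powr - (b - e) / e)"
      using summable_powr_of_Suc_le[OF x e(2)] by (rule summable_divide)
    fix n
    have x1: "real (x n) \<ge> 1" using x[of n] by linarith
    have "ln (real (x n)) * real (x n) powr - b \<le> real (x n) powr e / e * real (x n) powr - b"
      using x1 e by (intro mult_right_mono ln_powr_bound) auto
    also have "\<dots> = real (x n) powr - (b - e) / e"
      using x1 by (simp add: powr_add[symmetric])
    finally show "norm (ln (real (x n)) * real (x n) powr - b) \<le> real (x n) powr - (b - e) / e"
      using x1 by simp
  qed
qed

lemma summable_norm_npowr:
  "(\<And>n. Suc n \<le> x n) \<Longrightarrow> Re s > 1 \<Longrightarrow> summable (\<lambda>n. norm (npowr (x n) s))"
  unfolding norm_npowr by (rule summable_powr_of_Suc_le)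

lemma summable_norm_log_npowr:
  assumes x: "\<And>n. Suc n \<le> x n" and s: "Re s > 1"
  shows "summable (\<lambda>n. norm (log_npowr (x n) s))"
proof -
  have "norm (log_npowr (x n) s) = ln (real (x n)) * real (x n) powr - Re s" for n
    using x[of n] by (intro norm_log_npowr) simp
  then show ?thesis using summable_ln_powr_of_Suc_le[OF x s] by simp
qed

lemma has_field_derivative_dirichlet_series:
  fixes x :: "nat \<Rightarrow> nat" and c :: "nat \<Rightarrow> complex"
  assumes x: "\<And>n. x n > 0"
    and summ: "\<And>a. a > A \<Longrightarrow> summable (\<lambda>n. norm (c n) * real (x n) powr - a)"
    and s: "Re s > A"
  shows "((\<lambda>z. \<Sum>n. c n * npowr (x n) z) has_field_derivative (\<Sum>n. - c n * log_npowr (x n) s)) (at s)"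
proof -
  define a where "a = (A + Re s) / 2"
  have aA: "a > A" and as: "Re s > a" using s by (auto simp: a_def)
  define S where "S = {z. Re z > a}"
  have oS: "open S" and sS: "s \<in> S" using as by (auto simp: S_def open_halfspace_Re_gt)
  have "((\<lambda>z. c n * npowr (x n) z) has_field_derivative - c n * log_npowr (x n) z) (at z)" for n z
    using DERIV_cmult[OF has_field_derivative_npowr[OF x]] by simp
  moreover have "\<forall>\<^sub>F n in sequentially. \<forall>z\<in>S. norm (c n * npowr (x n) z) \<le> norm (c n) * real (x n) powr - a"
  proof (intro always_eventually allI ballI)
    fix n z assume "z \<in> S"
    then have "real (x n) powr - Re z \<le> real (x n) powr - a"
      using x[of n] by (intro powr_mono) (auto simp: S_def Suc_le_eq)
    then show "norm (c n * npowr (x n) z) \<le> norm (c n) * real (x n) powr - a"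
      unfolding norm_mult norm_npowr by (rule mult_left_mono) simp
  qed
  ultimately obtain g g' where gg: "\<forall>z \<in> S. ((\<lambda>n. c n * npowr (x n) z) sums g z) \<and>
      ((\<lambda>n. - c n * log_npowr (x n) z) sums g' z) \<and> (g has_field_derivative g' z) (at z)"
    by (rule series_and_derivative_comparison[OF oS summ[OF aA]]) blast+
  have "((\<lambda>z. \<Sum>n. c n * npowr (x n) z) has_field_derivative g' s) (at s)"
    by (rule has_field_derivative_transform_within_open[OF _ oS sS, of g])
       (use gg sS sums_unique in auto)
  moreover have "g' s = (\<Sum>n. - c n * log_npowr (x n) s)"
    using gg sS sums_unique by blast
  ultimately show ?thesis by simp
qed

lemma has_field_derivative_suminf_npowr:
  assumes x: "\<And>n. Suc n \<le> x n" and s: "Re s > 1"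
  shows "((\<lambda>z. \<Sum>n. npowr (x n) z) has_field_derivative - (\<Sum>n. log_npowr (x n) s)) (at s)"
proof -
  have x0: "x n > 0" for n using x[of n] by linarith
  have "((\<lambda>z. \<Sum>n. 1 * npowr (x n) z) has_field_derivative (\<Sum>n. - 1 * log_npowr (x n) s)) (at s)"
    using x0 summable_powr_of_Suc_le[OF x] s by (intro has_field_derivative_dirichlet_series[where A = 1]) auto
  moreover have "(\<Sum>n. - log_npowr (x n) s) = - (\<Sum>n. log_npowr (x n) s)"
    using summable_norm_cancel[OF summable_norm_log_npowr[OF x s]] by (rule suminf_minus)
  ultimately show ?thesis by simp
qed

lemma holomorphic_suminf_log_npowr:
  assumes x: "\<And>n. Suc n \<le> x n"
  shows "(\<lambda>z. \<Sum>n. log_npowr (x n) z) holomorphic_on {s. Re s > 1}"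
proof -
  have x0: "x n > 0" for n using x[of n] by linarith
  have "norm (of_real (ln (real (x n))) :: complex) = ln (real (x n))" for n
    using x0[of n] by simp
  then have "((\<lambda>z. \<Sum>n. of_real (ln (real (x n))) * npowr (x n) z) has_field_derivative
          (\<Sum>n. - of_real (ln (real (x n))) * log_npowr (x n) s)) (at s)" if "Re s > 1" for s
    using x0 summable_ln_powr_of_Suc_le[OF x] that
    by (intro has_field_derivative_dirichlet_series[where A = 1]) auto
  then show ?thesis
    unfolding holomorphic_on_open[OF open_halfspace_Re_gt] log_npowr_def[of "x _"] by blast
qed

lemma eta_M_range:
  assumes inj: "inj x" and x: "\<And>n. Suc n \<le> x n" and s: "Re s > 1"
  shows "eta_M (range x) s = (\<Sum>n. npowr (x n) s)"
proof -
  have "eta_M (range x) s = (\<Sum>\<^sub>\<infinity>n. npowr (x n) s)"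
    unfolding eta_M_def using infsum_reindex[OF inj, of "\<lambda>p. of_nat p powr - s"]
    by (simp add: o_def npowr_def)
  also have "\<dots> = (\<Sum>n. npowr (x n) s)"
    using summable_norm_npowr[OF x s]
    by (intro infsumI norm_summable_imp_has_sum summable_sums[OF summable_norm_cancel])
  finally show ?thesis .
qed

lemma deriv_eta_M_range:
  assumes inj: "inj x" and x: "\<And>n. Suc n \<le> x n" and s: "Re s > 1"
  shows "deriv (eta_M (range x)) s = - (\<Sum>n. log_npowr (x n) s)"
proof (rule DERIV_imp_deriv)
  show "(eta_M (range x) has_field_derivative - (\<Sum>n. log_npowr (x n) s)) (at s)"
    using has_field_derivative_transform_within_open[OF has_field_derivative_suminf_npowr[OF x s]
        open_halfspace_Re_gt, of 1 "eta_M (range x)"] eta_M_range[OF inj x] s by simp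
qed

section \<open>The primes and arithmetical lists\<close>

definition nth_prime :: "nat \<Rightarrow> nat" where
  "nth_prime n = enumerate {p. prime p} n"

lemma infinite_primes_nat: "infinite {p::nat. prime p}"
  using primes_infinite by simp

lemma prime_nth_prime: "prime (nth_prime n)"
  using enumerate_in_set[OF infinite_primes_nat] by (simp add: nth_prime_def)

lemma nth_prime_less_iff [simp]: "nth_prime m < nth_prime n \<longleftrightarrow> m < n"
  unfolding nth_prime_def using infinite_primes_nat by simp

lemma nth_prime_le_iff [simp]: "nth_prime m \<le> nth_prime n \<longleftrightarrow> m \<le> n"
  unfolding nth_prime_def using infinite_primes_nat by simp

lemma inj_nth_prime: "inj nth_prime"
  unfolding nth_prime_def using inj_enumerate[OF infinite_primes_nat] .

lemma nth_prime_eq_iff [simp]: "nth_prime m = nth_prime n \<longleftrightarrow> m = n"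
  using inj_nth_prime by (auto dest: injD)

lemma range_nth_prime: "range nth_prime = {p. prime p}"
  using bij_enumerate[OF infinite_primes_nat] by (simp add: nth_prime_def bij_betw_def)

lemma Suc_Suc_le_nth_prime: "Suc (Suc n) \<le> nth_prime n"
proof (induction n)
  case 0
  then show ?case using prime_ge_2_nat[OF prime_nth_prime[of 0]] by simp
next
  case (Suc n)
  then show ?case using nth_prime_less_iff[of n "Suc n"] by linarith
qed

lemma Suc_le_nth_prime: "Suc n \<le> nth_prime n"
  using Suc_Suc_le_nth_prime[of n] by simp

definition arith_prime_seq :: "nat \<Rightarrow> nat \<Rightarrow> nat \<Rightarrow> nat" where
  "arith_prime_seq r r0 j = nth_prime (r0 - 1 + j * r)"

lemma arith_list_eq_range:
  assumes "r0 \<ge> 1"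
  shows "arith_list r r0 = range (arith_prime_seq r r0)"
proof -
  have "nth_prime1 (r0 + j * r) = arith_prime_seq r r0 j" for j
    using assms by (simp add: nth_prime1_def nth_prime_def arith_prime_seq_def)
  then show ?thesis by (auto simp: arith_list_def)
qed

lemma inj_arith_prime_seq: "r \<ge> 1 \<Longrightarrow> inj (arith_prime_seq r r0)"
  by (auto simp: arith_prime_seq_def inj_on_def)

lemma Suc_le_arith_prime_seq:
  assumes "r \<ge> 1"
  shows "Suc j \<le> arith_prime_seq r r0 j"
proof -
  have "j \<le> r0 - 1 + j * r" using assms by (simp add: trans_le_add2)
  then show ?thesis using Suc_le_nth_prime[of "r0 - 1 + j * r"] by (simp add: arith_prime_seq_def)
qed

definition prime_zeta :: "complex \<Rightarrow> complex" where
  "prime_zeta s = (\<Sum>n. npowr (nth_prime n) s)"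

definition prime_log_zeta :: "complex \<Rightarrow> complex" where
  "prime_log_zeta s = (\<Sum>n. log_npowr (nth_prime n) s)"

lemma has_field_derivative_prime_zeta:
  "Re s > 1 \<Longrightarrow> (prime_zeta has_field_derivative - prime_log_zeta s) (at s)"
  unfolding prime_zeta_def[abs_def] prime_log_zeta_def
  by (rule has_field_derivative_suminf_npowr[OF Suc_le_nth_prime])

lemma holomorphic_prime_log_zeta: "prime_log_zeta holomorphic_on {s. Re s > 1}"
  unfolding prime_log_zeta_def[abs_def] by (rule holomorphic_suminf_log_npowr[OF Suc_le_nth_prime])

lemma prime_log_zeta_sums: "Re s > 1 \<Longrightarrow> (\<lambda>n. log_npowr (nth_prime n) s) sums prime_log_zeta s"
  unfolding prime_log_zeta_def
  by (intro summable_sums[OF summable_norm_cancel] summable_norm_log_npowr Suc_le_nth_prime)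

lemma deriv_eta_M_primes: "Re s > 1 \<Longrightarrow> deriv (eta_M (arith_list 1 1)) s = - prime_log_zeta s"
  using deriv_eta_M_range[OF inj_nth_prime Suc_le_nth_prime]
  by (simp add: arith_list_eq_range arith_prime_seq_def[abs_def] prime_log_zeta_def)

section \<open>The zeta function on the right half plane\<close>

text \<open>\<open>zeta_ext_term s n\<close> is \<open>(n+1)\<^sup>-\<^sup>s\<close> minus the integral of \<open>t\<^sup>-\<^sup>s\<close> over \<open>[n+1, n+2]\<close>; it is
  of order \<open>|s| n powr (- Re s - 1)\<close>, so adding these terms to \<open>1/(s-1)\<close>, the integral over
  \<open>[1, \<infinity>)\<close>, continues \<open>\<zeta>\<close> to \<open>Re s > 0\<close>.\<close>

definition zeta_ext_term :: "complex \<Rightarrow> nat \<Rightarrow> complex" where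
  "zeta_ext_term s n = npowr (Suc n) s
     - (of_nat (Suc (Suc n)) powr (1 - s) - of_nat (Suc n) powr (1 - s)) / (1 - s)"

definition zeta_ext :: "complex \<Rightarrow> complex" where
  "zeta_ext s = 1 / (s - 1) + (\<Sum>n. zeta_ext_term s n)"

lemma norm_zeta_ext_term_le:
  assumes s: "Re s > 0" "s \<noteq> 1"
  shows "norm (zeta_ext_term s n) \<le> norm s * real (Suc n) powr (- Re s - 1)"
proof -
  define m where "m = real (Suc n)"
  define f :: "nat \<Rightarrow> complex \<Rightarrow> complex" where
    "f i = (if i = 0 then (\<lambda>z. z powr (1 - s) / (1 - s))
            else if i = 1 then (\<lambda>z. z powr - s) else (\<lambda>z. - s * z powr (- s - 1)))" for i
  have m: "m \<ge> 1" by (simp add: m_def)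
  have Taylor: "norm (f 0 (of_real (m + 1)) - (\<Sum>i\<le>1. f i (of_real m) / fact i))
      \<le> norm s * m powr (- Re s - 1) / fact 1"
  proof (rule norm_Taylor_unit_interval)
    fix i :: nat and t :: real
    assume "i \<le> 1" "m \<le> t" "t \<le> m + 1"
    then have t: "of_real t \<notin> \<real>\<^sub>\<le>\<^sub>0" using m by (auto simp: nonpos_Reals_def)
    have "1 - s \<noteq> 0" using s by simp
    then have "((\<lambda>z. z powr (1 - s) / (1 - s)) has_field_derivative (of_real t) powr - s) (at (of_real t))"
      using DERIV_cdivide[OF has_field_derivative_powr[OF t, of "1 - s"], of "1 - s"] by simp
    moreover have "((\<lambda>z. z powr - s) has_field_derivative - s * (of_real t) powr (- s - 1)) (at (of_real t))"
      by (rule has_field_derivative_powr[OF t])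
    ultimately show "(f i has_field_derivative f (Suc i) (of_real t)) (at (of_real t))"
      using \<open>i \<le> 1\<close> by (auto simp: f_def le_Suc_eq)
  next
    fix t assume "m \<le> t" "t \<le> m + 1"
    then show "norm (f (Suc 1) (of_real t)) \<le> norm s * m powr (- Re s - 1)"
      using m s by (auto simp: f_def norm_mult norm_powr_real_powr intro!: mult_left_mono powr_mono2')
  qed
  have "zeta_ext_term s n = - (f 0 (of_real (m + 1)) - (\<Sum>i\<le>1. f i (of_real m) / fact i))"
    by (simp add: zeta_ext_term_def f_def m_def npowr_def add.commute diff_divide_distrib)
  then have "norm (zeta_ext_term s n) = norm (f 0 (of_real (m + 1)) - (\<Sum>i\<le>1. f i (of_real m) / fact i))"
    by (simp only: norm_minus_cancel)
  with Taylor show ?thesis by (simp add: m_def)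
qed

lemma holomorphic_suminf_zeta_ext_term:
  shows "(\<lambda>s. \<Sum>n. zeta_ext_term s n) holomorphic_on {s. Re s > 0} - {1}"
    and "s \<in> {s. Re s > 0} - {1} \<Longrightarrow> summable (zeta_ext_term s)"
proof -
  have S: "open ({s. Re s > 0} - {1})"
    by (intro open_Diff open_halfspace_Re_gt) auto
  have hol: "(\<lambda>s. zeta_ext_term s n) holomorphic_on {s. Re s > 0} - {1}" for n
    unfolding zeta_ext_term_def npowr_def by (intro holomorphic_intros) auto
  have bound: "\<exists>d h. 0 < d \<and> summable h \<and> (\<forall>n. \<forall>y\<in>ball x d \<inter> ({s. Re s > 0} - {1}). norm (zeta_ext_term y n) \<le> h n)"
    if "x \<in> {s. Re s > 0} - {1}" for x
  proof (intro exI conjI allI ballI)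
    define h where "h n = (norm x + 1) * real (Suc n) powr - (Re x / 2 + 1)" for n
    show "min (Re x / 2) 1 > 0" using that by simp
    have "summable (\<lambda>n. real (Suc n) powr - (Re x / 2 + 1))"
      using that by (intro summable_powr_of_Suc_le) auto
    then show "summable h"
      unfolding h_def by (rule summable_mult)
    fix n y assume y: "y \<in> ball x (min (Re x / 2) 1) \<inter> ({s. Re s > 0} - {1})"
    then have "norm (x - y) < min (Re x / 2) 1" by (simp add: dist_norm)
    then have "Re y \<ge> Re x / 2" "norm y \<le> norm x + 1"
      using abs_Re_le_cmod[of "x - y"] norm_triangle_ineq3[of x y] by (auto simp: norm_minus_commute)
    moreover have "norm (zeta_ext_term y n) \<le> norm y * real (Suc n) powr (- Re y - 1)"
      using y by (intro norm_zeta_ext_term_le) auto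
    moreover have "norm y * real (Suc n) powr (- Re y - 1) \<le> h n"
      unfolding h_def using calculation(1,2) by (intro mult_mono powr_mono) auto
    ultimately show "norm (zeta_ext_term y n) \<le> h n" by linarith
  qed
  show "(\<lambda>s. \<Sum>n. zeta_ext_term s n) holomorphic_on {s. Re s > 0} - {1}"
    by (rule holomorphic_on_suminf_local(1)[OF S hol bound])
  show "s \<in> {s. Re s > 0} - {1} \<Longrightarrow> summable (zeta_ext_term s)"
    using holomorphic_on_suminf_local(2)[OF S hol bound] by simp
qed

lemma holomorphic_zeta_ext: "zeta_ext holomorphic_on {s. Re s > 0} - {1}"
  unfolding zeta_ext_def[abs_def]
  by (intro holomorphic_intros holomorphic_suminf_zeta_ext_term) auto

lemma zeta_ext_eq_series:
  assumes s: "Re s > 1"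
  shows "zeta_ext s = (\<Sum>n. npowr (Suc n) s)"
proof -
  define G where "G n = of_nat (Suc n) powr (1 - s) / (1 - s)" for n
  have s1: "1 - s \<noteq> 0" using s by auto
  have "(\<lambda>n. real (Suc n) powr (1 - Re s) / norm (1 - s)) \<longlonglongrightarrow> 0 / norm (1 - s)"
    using s by (intro tendsto_divide tendsto_neg_powr filterlim_compose[OF filterlim_real_sequentially
        filterlim_Suc]) auto
  moreover have "norm (G n) = real (Suc n) powr (1 - Re s) / norm (1 - s)" for n
    unfolding G_def by (simp add: norm_divide norm_powr_real_powr)
  ultimately have "(\<lambda>n. norm (G n)) \<longlonglongrightarrow> 0" by simp
  then have "G \<longlonglongrightarrow> 0" by (rule tendsto_norm_zero_cancel)
  then have tel: "(\<lambda>n. G (Suc n) - G n) sums (0 - G 0)" by (rule telescope_sums)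
  have "summable (\<lambda>n. npowr (Suc n) s)"
    using s by (intro summable_norm_cancel[OF summable_norm_npowr]) auto
  then have "(\<lambda>n. npowr (Suc n) s - (G (Suc n) - G n)) sums ((\<Sum>n. npowr (Suc n) s) - (0 - G 0))"
    by (rule sums_diff[OF summable_sums tel])
  moreover have "npowr (Suc n) s - (G (Suc n) - G n) = zeta_ext_term s n" for n
    by (simp add: zeta_ext_term_def G_def diff_divide_distrib)
  ultimately have "(\<Sum>n. zeta_ext_term s n) = (\<Sum>n. npowr (Suc n) s) + 1 / (1 - s)"
    by (simp add: sums_iff G_def)
  then show ?thesis using s1 by (simp add: zeta_ext_def field_simps)
qed

lemma powr_add1_diff_ge:
  fixes m c :: real
  assumes m: "m > 0" and c: "0 < c" "c < 1"
  shows "(m + 1) powr (c - 1) \<le> ((m + 1) powr c - m powr c) / c"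
proof -
  have "\<exists>z. m < z \<and> z < m + 1 \<and> (m + 1) powr c - m powr c = ((m + 1) - m) * (c * z powr (c - 1))"
    by (rule MVT2) (use m in \<open>auto intro!: has_real_derivative_powr\<close>)
  then obtain z where z: "m < z" "z < m + 1" "(m + 1) powr c - m powr c = c * z powr (c - 1)"
    by auto
  have "(m + 1) powr (c - 1) \<le> z powr (c - 1)"
    using z m c by (intro powr_mono2') auto
  then show ?thesis using z c by (simp add: field_simps)
qed

text \<open>For \<open>0 < c < 1\<close> the terms \<open>zeta_ext_term c n\<close> are bounded by the telescoping terms
  \<open>(n+1)\<^sup>-\<^sup>c - (n+2)\<^sup>-\<^sup>c\<close>, so their sum is at most \<open>1\<close>, while \<open>1/(c-1) < -1\<close>.\<close>

lemma Re_zeta_ext_term_of_real_le: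
  assumes c: "0 < c" "c < 1"
  shows "Re (zeta_ext_term (of_real c) n) \<le> real (Suc n) powr - c - real (Suc (Suc n)) powr - c"
proof -
  define m where "m = real (Suc n)"
  have m: "m > 0" and m1: "real (Suc (Suc n)) = m + 1" by (simp_all add: m_def)
  have "1 - of_real c = (of_real (1 - c) :: complex)" by simp
  then have "zeta_ext_term (of_real c) n
      = of_real (m powr - c - ((m + 1) powr (1 - c) - m powr (1 - c)) / (1 - c))"
    unfolding zeta_ext_term_def npowr_of_real m1[symmetric] m_def
    by (simp only: of_nat_powr_of_real) simp
  then have "Re (zeta_ext_term (of_real c) n) = m powr - c - ((m + 1) powr (1 - c) - m powr (1 - c)) / (1 - c)"
    by simp
  also have "\<dots> \<le> m powr - c - (m + 1) powr ((1 - c) - 1)"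
    using powr_add1_diff_ge[OF m, of "1 - c"] c by simp
  finally show ?thesis by (simp add: m1 m_def)
qed

lemma Re_zeta_ext_of_real_neg:
  assumes c: "0 < c" "c < 1"
  shows "Re (zeta_ext (of_real c)) < 0"
proof -
  define f where "f n = real (Suc n) powr - c" for n
  have sm: "summable (zeta_ext_term (of_real c))"
    using c by (intro holomorphic_suminf_zeta_ext_term(2)) auto
  have "f \<longlonglongrightarrow> 0"
    unfolding f_def using c
    by (intro tendsto_neg_powr filterlim_compose[OF filterlim_real_sequentially filterlim_Suc]) auto
  then have tel: "(\<lambda>n. f n - f (Suc n)) sums (f 0 - 0)" by (rule telescope_sums')
  have "(\<Sum>n. Re (zeta_ext_term (of_real c) n)) \<le> (\<Sum>n. f n - f (Suc n))"
    using Re_zeta_ext_term_of_real_le[OF c]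
    by (intro suminf_le summable_Re[OF sm] sums_summable[OF tel]) (simp add: f_def)
  also have "\<dots> = 1" using sums_unique[OF tel] by (simp add: f_def)
  finally have "(\<Sum>n. Re (zeta_ext_term (of_real c) n)) \<le> 1" .
  moreover have "1 / (of_real c - 1) = (of_real (1 / (c - 1)) :: complex)" by simp
  then have "Re (zeta_ext (of_real c)) = 1 / (c - 1) + (\<Sum>n. Re (zeta_ext_term (of_real c) n))"
    unfolding zeta_ext_def using Re_suminf[OF sm] by simp
  moreover have "1 / (c - 1) + 1 < 0" using c by (simp add: field_simps)
  ultimately show ?thesis by linarith
qed

lemma zeta_ext_2_neq_0: "zeta_ext 2 \<noteq> 0"
proof -
  have sm: "summable (\<lambda>n. npowr (Suc n) 2)"
    using summable_norm_npowr[of Suc 2] by (rule summable_norm_cancel) simp_all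
  have "Re (zeta_ext 2) = (\<Sum>n. Re (npowr (Suc n) 2))"
    using zeta_ext_eq_series[of 2] Re_suminf[OF sm] by simp
  also have "\<dots> > 0"
  proof (rule suminf_pos)
    show "summable (\<lambda>n. Re (npowr (Suc n) 2))" using summable_Re[OF sm] .
    show "Re (npowr (Suc n) 2) > 0" for n
      using npowr_of_real[of "Suc n" 2] by simp
  qed
  finally show ?thesis by auto
qed

lemma riemann_zeta_eq_zeta_ext:
  assumes "s \<in> {s. Re s > 0} - {1}"
  shows "riemann_zeta s = zeta_ext s"
proof -
  let ?D = "{s. Re s > 0} - {1}"
  have "\<exists>f. f holomorphic_on ?D \<and> (\<forall>s. Re s > 1 \<longrightarrow> f s = (\<Sum>n. of_nat (Suc n) powr - s))"
    using holomorphic_zeta_ext zeta_ext_eq_series by (auto simp: npowr_def)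
  then have "riemann_zeta holomorphic_on ?D \<and> (\<forall>s. Re s > 1 \<longrightarrow> riemann_zeta s = (\<Sum>n. of_nat (Suc n) powr - s))"
    unfolding riemann_zeta_def by (rule someI_ex)
  then have rz: "riemann_zeta holomorphic_on ?D" "\<And>s. Re s > 1 \<Longrightarrow> riemann_zeta s = zeta_ext s"
    using zeta_ext_eq_series by (auto simp: npowr_def)
  show ?thesis
  proof (rule analytic_continuation_open[of "{s. Re s > 1}" ?D riemann_zeta zeta_ext])
    show "connected ?D"
      by (intro connected_open_delete open_halfspace_Re_gt convex_connected convex_halfspace_Re_gt) auto
    show "{s. Re s > 1} \<noteq> {}" by (auto intro: exI[of _ 2])
  qed (use rz holomorphic_zeta_ext assms in \<open>auto simp: open_halfspace_Re_gt open_Diff\<close>)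
qed

section \<open>The logarithmic derivative of zeta\<close>

definition prime_power_log_zeta :: "complex \<Rightarrow> complex" where
  "prime_power_log_zeta s =
     (\<Sum>n. log_npowr (nth_prime n) s * npowr (nth_prime n) s / (1 - npowr (nth_prime n) s))"

lemma norm_npowr_nth_prime_less_1: "Re s > 0 \<Longrightarrow> norm (npowr (nth_prime n) s) < 1"
  using Suc_Suc_le_nth_prime[of n] by (simp add: norm_npowr powr_less_one)

lemma bij_betw_nth_prime_powers:
  "bij_betw (\<lambda>(n, k). nth_prime n ^ Suc k) UNIV (Collect primepow)"
proof -
  have "bij_betw nth_prime UNIV (Collect prime)"
    using inj_nth_prime range_nth_prime by (simp add: bij_betw_def)
  then have "bij_betw (map_prod nth_prime id) (UNIV \<times> UNIV) (Collect prime \<times> UNIV)"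
    by (intro bij_betw_map_prod) simp_all
  from bij_betw_trans[OF this bij_betw_primepows] show ?thesis
    by (simp add: o_def case_prod_unfold map_prod_def)
qed

lemma summable_on_mangoldt_npowr:
  assumes s: "Re s > 1"
  shows "(\<lambda>d. mangoldt d * npowr d s) summable_on {1..}"
proof -
  have "norm (norm (mangoldt (Suc n) * npowr (Suc n) s)) \<le> norm (log_npowr (Suc n) s)" for n
    using mangoldt_le[of "Suc n"] by (simp add: norm_mult log_npowr_def abs_mult mult_right_mono)
  then have "summable (\<lambda>n. norm (mangoldt (Suc n) * npowr (Suc n) s))"
    by (intro summable_comparison_test'[OF summable_norm_log_npowr[of Suc, OF _ s]]) auto
  then show ?thesis by (rule abs_summable_summable[OF abs_summable_on_atLeast_1])
qed

text \<open>Expanding \<open>\<Lambda>(p\<^sup>k) = ln p\<close> over the prime powers: the terms with \<open>k = 1\<close> give \<open>Q\<close>,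
  the geometric tails with \<open>k \<ge> 2\<close> give \<open>R\<close>.\<close>

lemma has_sum_mangoldt_npowr:
  assumes s: "Re s > 1"
  shows "((\<lambda>d. mangoldt d * npowr d s) has_sum (prime_log_zeta s + prime_power_log_zeta s)) {1..}"
proof -
  define c where "c n = npowr (nth_prime n) s" for n
  define L where "L n = (of_real (ln (real (nth_prime n))) :: complex)" for n
  have c1: "norm (c n) < 1" for n
    unfolding c_def using s by (simp add: norm_npowr_nth_prime_less_1)
  obtain \<Lambda> where \<Lambda>: "((\<lambda>d. mangoldt d * npowr d s) has_sum \<Lambda>) {1..}"
    using summable_on_mangoldt_npowr[OF s] unfolding summable_on_def ..
  have "((\<lambda>d. mangoldt d * npowr d s) has_sum \<Lambda>) (Collect primepow)"
  proof (subst has_sum_cong_neutral)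
    show "((\<lambda>d. mangoldt d * npowr d s) has_sum \<Lambda>) {1..}" by (rule \<Lambda>)
  qed (auto simp: mangoldt_def dest: primepow_gt_Suc_0)
  then have "((\<lambda>x. (\<lambda>d. mangoldt d * npowr d s) ((\<lambda>(n, k). nth_prime n ^ Suc k) x)) has_sum \<Lambda>) UNIV"
    using has_sum_reindex_bij_betw[OF bij_betw_nth_prime_powers, of "\<lambda>d. mangoldt d * npowr d s" \<Lambda>]
    by simp
  then have H: "((\<lambda>(n, k). L n * c n ^ Suc k) has_sum \<Lambda>) (UNIV \<times> UNIV)"
    by (simp add: L_def c_def npowr_power prime_nth_prime case_prod_unfold del: power_Suc)
  have "((\<lambda>k. L n * c n ^ Suc k) has_sum L n * (c n / (1 - c n))) UNIV" for n
    by (rule has_sum_cmult_right[OF has_sum_geometric_Suc[OF c1]])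
  then have "((\<lambda>n. L n * (c n / (1 - c n))) has_sum \<Lambda>) UNIV"
    by (intro has_sum_SigmaD[OF H]) simp
  then have "(\<lambda>n. L n * (c n / (1 - c n)) - L n * c n) sums (\<Lambda> - prime_log_zeta s)"
    using prime_log_zeta_sums[OF s] unfolding L_def c_def log_npowr_def
    by (intro sums_diff[OF has_sum_imp_sums])
  moreover have "L n * (c n / (1 - c n)) - L n * c n = log_npowr (nth_prime n) s * c n / (1 - c n)" for n
  proof -
    have "1 - c n \<noteq> 0" using c1[of n] by auto
    moreover have "log_npowr (nth_prime n) s = L n * c n" by (simp add: L_def c_def log_npowr_def)
    ultimately show ?thesis by (simp add: field_simps)
  qed
  ultimately have "(\<lambda>n. log_npowr (nth_prime n) s * c n / (1 - c n)) sums (\<Lambda> - prime_log_zeta s)"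
    by simp
  then have "prime_power_log_zeta s = \<Lambda> - prime_log_zeta s"
    unfolding prime_power_log_zeta_def c_def by (rule sums_unique[symmetric])
  then show ?thesis using \<Lambda> by simp
qed

lemma has_sum_log_npowr_eq_product:
  assumes s: "Re s > 1"
  shows "((\<lambda>n. log_npowr n s) has_sum ((prime_log_zeta s + prime_power_log_zeta s) * zeta_ext s)) {1..}"
proof -
  define \<Lambda> where "\<Lambda> = prime_log_zeta s + prime_power_log_zeta s"
  have ha: "((\<lambda>d. mangoldt d * npowr d s) has_sum \<Lambda>) {1..}"
    unfolding \<Lambda>_def by (rule has_sum_mangoldt_npowr[OF s])
  have hb: "((\<lambda>m. npowr m s) has_sum zeta_ext s) {1..}"
    using has_sum_atLeast_1[OF summable_norm_npowr[of Suc s]] s by (simp add: zeta_ext_eq_series)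
  have "((\<lambda>(d, m). mangoldt d * npowr d s * npowr m s) has_sum
      (infsum (\<lambda>d. mangoldt d * npowr d s) {1..} * infsum (\<lambda>m. npowr m s) {1..})) ({1..} \<times> {1..})"
  proof (rule has_sum_mult_Times)
    show "(\<lambda>d. norm (mangoldt d * npowr d s)) summable_on {1..}"
      by (rule summable_on_iff_abs_summable_on_complex[THEN iffD1, OF summable_on_mangoldt_npowr[OF s]])
    show "(\<lambda>m. norm (npowr m s)) summable_on {1..}"
      using s by (intro abs_summable_on_atLeast_1 summable_norm_npowr) auto
  qed
  then have "((\<lambda>(d, m). mangoldt d * npowr d s * npowr m s) has_sum (\<Lambda> * zeta_ext s)) ({1..} \<times> {1..})"
    by (simp only: infsumI[OF ha] infsumI[OF hb])
  then have "((\<lambda>(n, d). mangoldt d * npowr d s * npowr (n div d) s) has_sum (\<Lambda> * zeta_ext s))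
      (SIGMA n:{1..}. {d. d dvd n})"
    using has_sum_divisor_pairs_iff[of "\<lambda>d m. mangoldt d * npowr d s * npowr m s"] by simp
  then have H: "((\<lambda>(n, d). mangoldt d * npowr n s) has_sum (\<Lambda> * zeta_ext s)) (SIGMA n:{1..}. {d. d dvd n})"
    by (rule has_sum_cong[THEN iffD1, rotated]) (auto simp: mult.assoc npowr_mult[symmetric])
  have "((\<lambda>d. mangoldt d * npowr n s) has_sum log_npowr n s) {d. d dvd n}" if "n \<in> {1..}" for n
  proof -
    have "(\<Sum>d | d dvd n. mangoldt d * npowr n s) = (\<Sum>d | d dvd n. mangoldt d) * npowr n s"
      by (simp add: sum_distrib_right)
    also have "\<dots> = log_npowr n s"
      using that mangoldt_sum[of n, where 'a = complex] by (simp add: log_npowr_def)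
    finally show ?thesis using that by (intro has_sum_finiteI) auto
  qed
  then show ?thesis using has_sum_SigmaD[OF H] unfolding \<Lambda>_def by auto
qed

lemma has_field_derivative_zeta_ext:
  assumes s: "Re s > 1"
  shows "(zeta_ext has_field_derivative - ((prime_log_zeta s + prime_power_log_zeta s) * zeta_ext s)) (at s)"
proof -
  have eq: "(\<Sum>n. log_npowr (Suc n) s) = (prime_log_zeta s + prime_power_log_zeta s) * zeta_ext s"
    using has_sum_unique[OF has_sum_atLeast_1 has_sum_log_npowr_eq_product[OF s]]
      summable_norm_log_npowr[of Suc, OF _ s] by simp
  have "((\<lambda>z. \<Sum>n. npowr (Suc n) z) has_field_derivative - (\<Sum>n. log_npowr (Suc n) s)) (at s)"
    using has_field_derivative_suminf_npowr[of Suc, OF _ s] by simp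
  then have "((\<lambda>z. \<Sum>n. npowr (Suc n) z) has_field_derivative
      - ((prime_log_zeta s + prime_power_log_zeta s) * zeta_ext s)) (at s)"
    by (simp only: eq)
  then show ?thesis
    by (rule has_field_derivative_transform_within_open[OF _ open_halfspace_Re_gt])
       (use s zeta_ext_eq_series in auto)
qed

lemma deriv_zeta_ext:
  "Re s > 1 \<Longrightarrow> deriv zeta_ext s = - ((prime_log_zeta s + prime_power_log_zeta s) * zeta_ext s)"
  by (intro DERIV_imp_deriv has_field_derivative_zeta_ext)

lemma norm_prime_power_log_zeta_term_le:
  assumes a: "a > 0" and y: "Re y \<ge> a"
  shows "norm (log_npowr (nth_prime n) y * npowr (nth_prime n) y / (1 - npowr (nth_prime n) y))
           \<le> ln (real (nth_prime n)) * real (nth_prime n) powr - (2 * a) / (1 - 2 powr - a)"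
proof -
  define p where "p = real (nth_prime n)"
  have p2: "p \<ge> 2" using Suc_Suc_le_nth_prime[of n] by (simp add: p_def)
  have c: "norm (npowr (nth_prime n) y) \<le> p powr - a"
    unfolding norm_npowr p_def[symmetric] using p2 y by (intro powr_mono) auto
  have "p powr - a \<le> 2 powr - a" using p2 a by (intro powr_mono2') auto
  then have "norm (1 - npowr (nth_prime n) y) \<ge> 1 - 2 powr - a"
    using c norm_triangle_ineq2[of 1 "npowr (nth_prime n) y"] by simp
  moreover have "1 - 2 powr - a > 0" using a by (simp add: powr_less_one)
  moreover have "norm (log_npowr (nth_prime n) y * npowr (nth_prime n) y) \<le> ln p * p powr - (2 * a)"
  proof -
    have "norm (log_npowr (nth_prime n) y * npowr (nth_prime n) y) = ln p * (norm (npowr (nth_prime n) y))\<^sup>2"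
      using p2 by (simp add: log_npowr_def norm_mult p_def power2_eq_square)
    also have "\<dots> \<le> ln p * (p powr - a)\<^sup>2"
      using c p2 by (intro mult_left_mono power_mono) auto
    also have "(p powr - a)\<^sup>2 = p powr - (2 * a)"
      by (simp add: power2_eq_square powr_add[symmetric])
    finally show ?thesis .
  qed
  ultimately show ?thesis
    unfolding norm_divide p_def[symmetric] using p2 by (intro frac_le) auto
qed

lemma holomorphic_prime_power_log_zeta: "prime_power_log_zeta holomorphic_on {s. Re s > 1/2}"
proof -
  define f where "f n s = log_npowr (nth_prime n) s * npowr (nth_prime n) s / (1 - npowr (nth_prime n) s)"
    for n s
  have S: "open {s. Re s > 1/2}" by (rule open_halfspace_Re_gt)
  have hol: "f n holomorphic_on {s. Re s > 1/2}" for n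
  proof -
    have "1 - npowr (nth_prime n) s \<noteq> 0" if "Re s > 1/2" for s
      using norm_npowr_nth_prime_less_1[of s n] that by auto
    then show ?thesis
      unfolding f_def log_npowr_def npowr_def by (intro holomorphic_intros) auto
  qed
  have bound: "\<exists>d h. 0 < d \<and> summable h \<and> (\<forall>n. \<forall>y\<in>ball x d \<inter> {s. Re s > 1/2}. norm (f n y) \<le> h n)"
    if "x \<in> {s. Re s > 1/2}" for x
  proof (intro exI conjI allI ballI)
    define a where "a = (Re x + 1/2) / 2"
    have a: "a > 0" "2 * a > 1" "Re x - a > 0" using that by (auto simp: a_def)
    show "Re x - a > 0" by (rule a(3))
    show "summable (\<lambda>n. ln (real (nth_prime n)) * real (nth_prime n) powr - (2 * a) / (1 - 2 powr - a))"
      by (intro summable_divide summable_ln_powr_of_Suc_le[OF Suc_le_nth_prime] a)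
    fix n y assume y: "y \<in> ball x (Re x - a) \<inter> {s. Re s > 1/2}"
    have "\<bar>Re x - Re y\<bar> \<le> norm (x - y)" using abs_Re_le_cmod[of "x - y"] by simp
    then have "Re y \<ge> a" using y by (auto simp: dist_norm)
    then show "norm (f n y) \<le> ln (real (nth_prime n)) * real (nth_prime n) powr - (2 * a) / (1 - 2 powr - a)"
      unfolding f_def by (rule norm_prime_power_log_zeta_term_le[OF a(1)])
  qed
  show ?thesis
    using holomorphic_on_suminf_local(1)[OF S hol bound]
    unfolding f_def prime_power_log_zeta_def[abs_def] .
qed

section \<open>Sums over arithmetical lists\<close>

definition log_npowr_majorant :: "real \<Rightarrow> nat \<Rightarrow> real" where
  "log_npowr_majorant R m = (1 + R) * (1 + ln (real m)) * real m powr (- 3 / 2)"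

lemma log_npowr_majorant_nonneg: "R \<ge> 0 \<Longrightarrow> log_npowr_majorant R m \<ge> 0"
  unfolding log_npowr_majorant_def by (cases "m = 0") auto

lemma summable_log_npowr_majorant: "summable (log_npowr_majorant R)"
proof -
  have "summable (\<lambda>n. (1 + R) * (real (Suc n) powr - (3 / 2) + ln (real (Suc n)) * real (Suc n) powr - (3 / 2)))"
    by (intro summable_mult summable_add summable_powr_of_Suc_le[of Suc] summable_ln_powr_of_Suc_le[of Suc]) auto
  then have "summable (\<lambda>n. log_npowr_majorant R (Suc n))"
    by (simp add: log_npowr_majorant_def algebra_simps)
  then show ?thesis by (rule summable_Suc_iff[THEN iffD1])
qed

lemma norm_deriv_ln_mult_powr_le:
  assumes m: "real m \<ge> 1" and t: "real m \<le> t" "t \<le> real m + 1" and y: "Re y \<ge> 1/2" and R: "norm y \<le> R"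
  shows "norm (inverse (of_real t) * of_real t powr - y + Ln (of_real t) * (- y * of_real t powr (- y - 1)))
           \<le> log_npowr_majorant R m"
proof -
  have t0: "t > 0" and lt: "0 \<le> ln t" "ln t \<le> 1 + ln (real m)"
    using m t ln_le_minus_one[of 2] ln_mult[of 2 "real m"] ln_mono[of t "2 * real m"] by auto
  have pw: "t powr (- Re y - 1) \<le> real m powr (- 3 / 2)"
    using t m y powr_mono[of "- Re y - 1" "- 3 / 2" t] powr_mono2'[of "- 3 / 2" "real m" t] by auto
  have "norm (inverse (of_real t) * of_real t powr - y + Ln (of_real t) * (- y * of_real t powr (- y - 1)))
      \<le> t powr (- Re y - 1) + ln t * norm y * t powr (- Re y - 1)"
    using norm_triangle_ineq[of "inverse (of_real t) * (of_real t) powr - y"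
        "Ln (of_real t) * (- y * (of_real t) powr (- y - 1))"] t0 lt
    by (simp add: norm_mult norm_inverse norm_powr_real_powr Ln_of_real powr_diff powr_minus
        divide_inverse mult_ac)
  also have "\<dots> \<le> real m powr (- 3 / 2) + (1 + ln (real m)) * R * real m powr (- 3 / 2)"
  proof -
    have "0 \<le> R" using R norm_ge_zero[of y] by linarith
    then have "0 \<le> (1 + ln (real m)) * R" using m by simp
    then show ?thesis using pw lt R by (intro add_mono mult_mono) auto
  qed
  also have "\<dots> \<le> log_npowr_majorant R m"
    using m R norm_ge_zero[of y] unfolding log_npowr_majorant_def by (simp add: algebra_simps)
  finally show ?thesis .
qed

lemma norm_log_npowr_diff_le:
  assumes m: "m \<ge> 1" and y: "Re y \<ge> 1/2" and R: "norm y \<le> R"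
  shows "norm (log_npowr m y - log_npowr (Suc m) y) \<le> log_npowr_majorant R m"
proof -
  define f :: "nat \<Rightarrow> complex \<Rightarrow> complex" where
    "f i = (if i = 0 then (\<lambda>u. Ln u * u powr - y)
            else (\<lambda>u. inverse u * u powr - y + Ln u * (- y * u powr (- y - 1))))" for i
  have m1: "real m \<ge> 1" using m by simp
  have "norm (f 0 (of_real (real m + 1)) - (\<Sum>i\<le>0. f i (of_real (real m)) / fact i))
          \<le> log_npowr_majorant R m / fact 0"
  proof (rule norm_Taylor_unit_interval)
    fix i :: nat and t :: real
    assume "i \<le> 0" "real m \<le> t" "t \<le> real m + 1"
    then have t: "of_real t \<notin> \<real>\<^sub>\<le>\<^sub>0" using m1 by (auto simp: nonpos_Reals_def)
    have "((\<lambda>u. Ln u * u powr - y) has_field_derivative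
            inverse (of_real t) * (of_real t) powr - y + ((- y) * (of_real t) powr (- y - 1)) * Ln (of_real t))
          (at (of_real t))"
      by (rule DERIV_mult[OF has_field_derivative_Ln[OF t] has_field_derivative_powr[OF t]])
    then show "(f i has_field_derivative f (Suc i) (of_real t)) (at (of_real t))"
      using \<open>i \<le> 0\<close> by (simp add: f_def mult.commute)
  next
    fix t :: real
    assume "real m \<le> t" "t \<le> real m + 1"
    then show "norm (f (Suc 0) (of_real t)) \<le> log_npowr_majorant R m"
      unfolding f_def using norm_deriv_ln_mult_powr_le[OF m1 _ _ y R] by simp
  qed
  moreover have "log_npowr m y - log_npowr (Suc m) y
      = - (f 0 (of_real (real m + 1)) - (\<Sum>i\<le>0. f i (of_real (real m)) / fact i))"
    using m1 Ln_of_nat[of "Suc m"] by (simp add: f_def log_npowr_def npowr_def add.commute)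
  ultimately show ?thesis by (simp only: norm_minus_cancel) simp
qed

text \<open>Grouping the primes in blocks of \<open>r\<close> consecutive ones, \<open>r\<close> times the first term of each
  block differs from the block sum by differences of \<open>ln m / m\<^sup>s\<close> at consecutive integers \<open>m\<close>.
  These are \<open>O(m\<^sup>-\<^sup>3\<^sup>/\<^sup>2 ln m)\<close> for \<open>Re s \<ge> 1/2\<close>, so the series of block differences converges
  there.\<close>

definition arith_block_diff :: "nat \<Rightarrow> nat \<Rightarrow> complex \<Rightarrow> nat \<Rightarrow> complex" where
  "arith_block_diff r r0 s j =
     (\<Sum>i<r. log_npowr (arith_prime_seq r r0 j) s - log_npowr (nth_prime (r0 - 1 + j * r + i)) s)"

lemma norm_arith_block_diff_le:
  assumes y: "Re y \<ge> 1/2" and R: "norm y \<le> R"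
  shows "norm (arith_block_diff r r0 y j)
           \<le> r * (\<Sum>m = arith_prime_seq r r0 j..<arith_prime_seq r r0 (Suc j). log_npowr_majorant R m)"
proof -
  define b where "b = r0 - 1 + j * r"
  have R0: "R \<ge> 0" using R norm_ge_zero[of y] by linarith
  have block: "norm (log_npowr (nth_prime b) y - log_npowr (nth_prime (b + i)) y)
      \<le> (\<Sum>m = nth_prime b..<nth_prime (b + r). log_npowr_majorant R m)" if "i < r" for i
  proof -
    have "norm (log_npowr (nth_prime b) y - log_npowr (nth_prime (b + i)) y)
        \<le> (\<Sum>m = nth_prime b..<nth_prime (b + i). norm (log_npowr m y - log_npowr (Suc m) y))"
      by (rule norm_diff_le_sum_Suc) simp
    also have "\<dots> \<le> (\<Sum>m = nth_prime b..<nth_prime (b + i). log_npowr_majorant R m)"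
    proof (rule sum_mono)
      fix m assume "m \<in> {nth_prime b..<nth_prime (b + i)}"
      then have "m \<ge> 1" using Suc_le_nth_prime[of b] by auto
      then show "norm (log_npowr m y - log_npowr (Suc m) y) \<le> log_npowr_majorant R m"
        by (rule norm_log_npowr_diff_le[OF _ y R])
    qed
    also have "\<dots> \<le> (\<Sum>m = nth_prime b..<nth_prime (b + r). log_npowr_majorant R m)"
      using that log_npowr_majorant_nonneg[OF R0] by (intro sum_mono2) auto
    finally show ?thesis .
  qed
  have "norm (arith_block_diff r r0 y j)
      \<le> (\<Sum>i<r. norm (log_npowr (nth_prime b) y - log_npowr (nth_prime (b + i)) y))"
    unfolding arith_block_diff_def arith_prime_seq_def b_def by (rule norm_sum)
  also have "\<dots> \<le> (\<Sum>i<r. \<Sum>m = nth_prime b..<nth_prime (b + r). log_npowr_majorant R m)"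
    using block by (intro sum_mono) auto
  finally show ?thesis by (simp add: arith_prime_seq_def b_def ac_simps)
qed

lemma holomorphic_suminf_arith_block_diff:
  "(\<lambda>s. \<Sum>j. arith_block_diff r r0 s j) holomorphic_on {s. Re s > 1/2}"
proof -
  have S: "open {s. Re s > 1/2}" by (rule open_halfspace_Re_gt)
  have hol: "(\<lambda>s. arith_block_diff r r0 s j) holomorphic_on {s. Re s > 1/2}" for j
    unfolding arith_block_diff_def log_npowr_def npowr_def by (intro holomorphic_intros)
  have bound: "\<exists>d h. 0 < d \<and> summable h \<and>
      (\<forall>j. \<forall>y\<in>ball x d \<inter> {s. Re s > 1/2}. norm (arith_block_diff r r0 y j) \<le> h j)" for x
  proof (intro exI conjI allI ballI)
    define R where "R = norm x + 1"
    define c where "c = arith_prime_seq r r0"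
    define h where "h j = r * (\<Sum>m = c j..<c (Suc j). log_npowr_majorant R m)" for j
    have R0: "R \<ge> 0" by (simp add: R_def)
    show "(1::real) > 0" by simp
    show "summable h"
    proof (rule bounded_imp_summable)
      show "h j \<ge> 0" for j
        unfolding h_def using log_npowr_majorant_nonneg[OF R0] by (intro mult_nonneg_nonneg sum_nonneg) auto
      have "mono c" unfolding c_def arith_prime_seq_def mono_def by (auto intro: mult_le_mono1)
      then have "(\<Sum>j\<le>N. h j) = r * (\<Sum>m = c 0..<c (Suc N). log_npowr_majorant R m)" for N
        unfolding h_def by (simp add: sum_distrib_left[symmetric] sum_atLeastLessThan_concat_mono)
      also have "\<dots> N \<le> r * suminf (log_npowr_majorant R)" for N
        using log_npowr_majorant_nonneg[OF R0]
        by (intro mult_left_mono sum_le_suminf summable_log_npowr_majorant) auto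
      finally show "(\<Sum>j\<le>N. h j) \<le> r * suminf (log_npowr_majorant R)" for N .
    qed
    fix j y assume "y \<in> ball x 1 \<inter> {s. Re s > 1/2}"
    then have "Re y \<ge> 1/2" "norm y \<le> R"
      using norm_triangle_ineq3[of x y] by (auto simp: R_def dist_norm norm_minus_commute)
    then show "norm (arith_block_diff r r0 y j) \<le> h j"
      unfolding h_def c_def by (rule norm_arith_block_diff_le)
  qed
  show ?thesis by (rule holomorphic_on_suminf_local(1)[OF S hol bound])
qed

lemma arith_prime_seq_log_series_eq:
  assumes r: "r \<ge> 1" and s: "Re s > 1"
  shows "of_nat r * (\<Sum>j. log_npowr (arith_prime_seq r r0 j) s)
           = prime_log_zeta s + (\<Sum>j. arith_block_diff r r0 s j) - (\<Sum>n<r0 - 1. log_npowr (nth_prime n) s)"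
proof -
  define a where "a n = log_npowr (nth_prime n) s" for n
  define b where "b j = r0 - 1 + j * r" for j
  define F where "F = (\<Sum>n<r0 - 1. a n)"
  have "(\<lambda>n. a (n + (r0 - 1))) sums (prime_log_zeta s - F)"
    using prime_log_zeta_sums[OF s] unfolding a_def F_def by (subst sums_iff_shift) simp
  then have "(\<lambda>j. \<Sum>i = j * r..<j * r + r. a (i + (r0 - 1))) sums (prime_log_zeta s - F)"
    by (rule sums_group) (use r in simp)
  moreover have "(\<Sum>i = j * r..<j * r + r. a (i + (r0 - 1))) = (\<Sum>i<r. a (b j + i))" for j
  proof -
    have "(\<Sum>i = j * r..<j * r + r. a (i + (r0 - 1))) = (\<Sum>i = 0..<r. a (i + j * r + (r0 - 1)))"
      using sum.shift_bounds_nat_ivl[of "\<lambda>i. a (i + (r0 - 1))" 0 "j * r" r] by (simp add: add.commute)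
    then show ?thesis by (simp add: b_def atLeast0LessThan algebra_simps)
  qed
  ultimately have blocks: "(\<lambda>j. \<Sum>i<r. a (b j + i)) sums (prime_log_zeta s - F)" by simp
  have "(\<lambda>j. a (b j)) sums (\<Sum>j. log_npowr (arith_prime_seq r r0 j) s)"
    unfolding a_def b_def arith_prime_seq_def[symmetric]
    by (rule summable_sums[OF summable_norm_cancel[OF summable_norm_log_npowr[OF Suc_le_arith_prime_seq[OF r] s]]])
  from sums_diff[OF sums_mult[OF this, of "of_nat r"] blocks]
  have "(\<lambda>j. arith_block_diff r r0 s j)
          sums (of_nat r * (\<Sum>j. log_npowr (arith_prime_seq r r0 j) s) - (prime_log_zeta s - F))"
    by (simp add: arith_block_diff_def arith_prime_seq_def a_def b_def sum_subtractf)
  then show ?thesis by (simp add: sums_iff F_def a_def)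
qed

section \<open>The integral of the prime counting function\<close>

definition log_powr_antideriv :: "complex \<Rightarrow> complex \<Rightarrow> complex" where
  "log_powr_antideriv s z = - (z powr - s * Ln z) / s - z powr - s / s\<^sup>2"

lemma has_field_derivative_log_powr_antideriv:
  assumes z: "z \<notin> \<real>\<^sub>\<le>\<^sub>0" and s: "s \<noteq> 0"
  shows "(log_powr_antideriv s has_field_derivative Ln z / z powr (s + 1)) (at z)"
proof -
  define A where "A = z powr - s"
  have z0: "z \<noteq> 0" using z by auto
  have A0: "A \<noteq> 0" using z0 by (simp add: A_def powr_def)
  have A1: "z powr (- s - 1) = A / z" unfolding A_def by (simp add: powr_diff)
  have A2: "z powr (s + 1) = z / A"
    unfolding A_def using z0 by (simp add: powr_add powr_minus divide_inverse)
  have "(log_powr_antideriv s has_field_derivative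
      - ((- s) * z powr (- s - 1) * Ln z + inverse z * z powr - s) / s - (- s) * z powr (- s - 1) / s\<^sup>2) (at z)"
    unfolding log_powr_antideriv_def[abs_def]
    by (intro DERIV_diff DERIV_cdivide DERIV_minus DERIV_mult has_field_derivative_powr
        has_field_derivative_Ln z)
  also have "- ((- s) * z powr (- s - 1) * Ln z + inverse z * z powr - s) / s - (- s) * z powr (- s - 1) / s\<^sup>2
      = Ln z / z powr (s + 1)"
    unfolding A1 A2 A_def[symmetric] using s z0 A0 by (simp add: field_simps power2_eq_square)
  finally show ?thesis .
qed

lemma has_integral_ln_div_powr:
  assumes "0 < a" "a \<le> b" and s: "s \<noteq> 0"
  shows "((\<lambda>t. of_real (ln t) / of_real t powr (s + 1)) has_integral
           (log_powr_antideriv s (of_real b) - log_powr_antideriv s (of_real a))) {a..b}"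
proof (rule fundamental_theorem_of_calculus[OF assms(2)])
  fix t assume t: "t \<in> {a..b}"
  then have z: "(of_real t :: complex) \<notin> \<real>\<^sub>\<le>\<^sub>0" using assms by (auto simp: nonpos_Reals_def)
  have "Ln (of_real t) = of_real (ln t)" using t assms by (simp add: Ln_of_real)
  then show "((\<lambda>t. log_powr_antideriv s (of_real t)) has_vector_derivative
      of_real (ln t) / of_real t powr (s + 1)) (at t within {a..b})"
    using has_vector_derivative_real_field[OF has_field_derivative_log_powr_antideriv[OF z s]]
    by (simp add: has_vector_derivative_at_within)
qed

lemma norm_log_powr_antideriv_le:
  assumes t: "t \<ge> 1" and s: "s \<noteq> 0"
  shows "norm (log_powr_antideriv s (of_real t)) \<le> t powr - Re s * ln t / norm s + t powr - Re s / (norm s)\<^sup>2"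
proof -
  have "norm (log_powr_antideriv s (of_real t))
      \<le> norm ((of_real t :: complex) powr - s * Ln (of_real t)) / norm s + norm ((of_real t :: complex) powr - s) / (norm s)\<^sup>2"
    unfolding log_powr_antideriv_def
    by (rule order_trans[OF norm_triangle_ineq4]) (simp add: norm_divide norm_power)
  also have "\<dots> = t powr - Re s * ln t / norm s + t powr - Re s / (norm s)\<^sup>2"
    using t by (simp add: norm_mult norm_powr_real_powr Ln_of_real)
  finally show ?thesis .
qed

lemma prime_pi_eq_floor:
  assumes "real k \<le> t" "t < real k + 1"
  shows "prime_pi t = prime_pi (real k)"
proof -
  have "real p \<le> t \<longleftrightarrow> p \<le> k" for p :: nat
  proof
    assume "real p \<le> t"
    then have "real p < real (k + 1)" using assms by simp
    then show "p \<le> k" by (simp only: of_nat_less_iff)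
  qed (use assms in simp)
  then show ?thesis unfolding prime_pi_def by simp
qed

lemma prime_pi_of_nat: "prime_pi (real k) = card {p. prime p \<and> p \<le> k}"
  unfolding prime_pi_def of_nat_le_iff ..

lemma prime_pi_Suc: "prime_pi (real (Suc k)) = prime_pi (real k) + (if prime (Suc k) then 1 else 0)"
proof -
  have "{p. prime p \<and> p \<le> Suc k} = {p. prime p \<and> p \<le> k} \<union> (if prime (Suc k) then {Suc k} else {})"
    by (auto simp: le_Suc_eq)
  moreover have "finite {p::nat. prime p \<and> p \<le> k}" by simp
  ultimately show ?thesis unfolding prime_pi_of_nat by simp
qed

lemma prime_pi_le:
  assumes "t \<ge> 0"
  shows "real (prime_pi t) \<le> t"
proof -
  have "{p::nat. prime p \<and> real p \<le> t} \<subseteq> {1..nat \<lfloor>t\<rfloor>}"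
    by (auto simp: le_nat_iff le_floor_iff dest: prime_gt_0_nat)
  then have "prime_pi t \<le> card {1..nat \<lfloor>t\<rfloor>}" unfolding prime_pi_def by (rule card_mono[rotated]) simp
  then have "real (prime_pi t) \<le> real (nat \<lfloor>t\<rfloor>)" by simp
  then show ?thesis using assms by linarith
qed

definition prime_pi_log_integrand :: "complex \<Rightarrow> real \<Rightarrow> complex" where
  "prime_pi_log_integrand s t = of_real (real (prime_pi t) * ln t) / of_real t powr (s + 1)"

lemma has_integral_prime_pi_log_integrand_unit:
  assumes k: "k \<ge> 1" and s: "s \<noteq> 0"
  shows "(prime_pi_log_integrand s has_integral
           of_nat (prime_pi (real k)) * (log_powr_antideriv s (of_real (real k + 1)) - log_powr_antideriv s (of_real (real k))))
         {real k..real k + 1}"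
proof (rule has_integral_spike_finite[of "{real k + 1}"])
  show "((\<lambda>t. of_nat (prime_pi (real k)) * (of_real (ln t) / of_real t powr (s + 1))) has_integral
      of_nat (prime_pi (real k)) * (log_powr_antideriv s (of_real (real k + 1)) - log_powr_antideriv s (of_real (real k))))
      {real k..real k + 1}"
    using k s by (intro has_integral_mult_right has_integral_ln_div_powr) auto
  show "prime_pi_log_integrand s t = of_nat (prime_pi (real k)) * (of_real (ln t) / of_real t powr (s + 1))"
    if "t \<in> {real k..real k + 1} - {real k + 1}" for t
    using that prime_pi_eq_floor[of k t] by (simp add: prime_pi_log_integrand_def)
qed simp

text \<open>Abel summation: on \<open>[2, N]\<close> the integral telescopes into a boundary term and a sum over the primes.\<close>

lemma has_integral_prime_pi_log_integrand:
  assumes N: "N \<ge> 2" and s: "s \<noteq> 0"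
  shows "(prime_pi_log_integrand s has_integral
           of_nat (prime_pi (real (N - 1))) * log_powr_antideriv s (of_real (real N))
           - (\<Sum>k<N. if prime k then log_powr_antideriv s (of_real (real k)) else 0)) {2..real N}"
  using N
proof (induction N rule: dec_induct)
  case base
  have "prime_pi 1 = 0" unfolding prime_pi_def by (auto dest: prime_gt_1_nat)
  moreover have "(prime_pi_log_integrand s has_integral 0) {2}" by (rule has_integral_refl(2))
  ultimately show ?case by (simp add: lessThan_nat_numeral)
next
  case (step N)
  define G where "G k = log_powr_antideriv s (of_real (real k))" for k
  define P where "P k = (if prime k then G k else 0)" for k
  have "(prime_pi_log_integrand s has_integral
      (of_nat (prime_pi (real (N - 1))) * G N - (\<Sum>k<N. P k))
      + of_nat (prime_pi (real N)) * (G (Suc N) - G N)) {2..real (Suc N)}"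
  proof (rule has_integral_combine)
    show "(prime_pi_log_integrand s has_integral
        of_nat (prime_pi (real (N - 1))) * G N - (\<Sum>k<N. P k)) {2..real N}"
      using step.IH unfolding G_def P_def .
    show "(prime_pi_log_integrand s has_integral of_nat (prime_pi (real N)) * (G (Suc N) - G N))
        {real N..real (Suc N)}"
      using has_integral_prime_pi_log_integrand_unit[of N s] step.hyps s by (simp add: G_def add.commute)
  qed (use step.hyps in auto)
  moreover have "(of_nat (prime_pi (real (N - 1))) * G N - (\<Sum>k<N. P k))
      + of_nat (prime_pi (real N)) * (G (Suc N) - G N)
      = of_nat (prime_pi (real (Suc N - 1))) * G (Suc N) - (\<Sum>k<Suc N. P k)"
  proof -
    have "prime_pi (real N) = prime_pi (real (N - 1)) + (if prime N then 1 else 0)"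
      using prime_pi_Suc[of "N - 1"] step.hyps by simp
    then show ?thesis by (simp add: P_def algebra_simps)
  qed
  ultimately have "(prime_pi_log_integrand s has_integral
      of_nat (prime_pi (real (Suc N - 1))) * G (Suc N) - (\<Sum>k<Suc N. P k)) {2..real (Suc N)}"
    by (simp only:)
  then show ?case unfolding G_def P_def .
qed

lemma tendsto_prime_pi_log_powr_antideriv:
  assumes s: "Re s > 1"
  shows "(\<lambda>N. of_nat (prime_pi (real (N - 1))) * log_powr_antideriv s (of_real (real N))) \<longlonglongrightarrow> 0"
proof (rule Lim_null_comparison)
  define a b where "a = 1 / norm s" and "b = 1 / (norm s)\<^sup>2"
  have "s \<noteq> 0" using s by auto
  have "(\<lambda>N. real N * (real N powr - c * (ln (real N) * a + b))) \<longlonglongrightarrow> 0" if "c > 1" for c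
    using that by real_asymp
  then show "(\<lambda>N. real N * (real N powr - Re s * (ln (real N) * a + b))) \<longlonglongrightarrow> 0"
    using s by blast
  show "\<forall>\<^sub>F N in sequentially. norm (of_nat (prime_pi (real (N - 1))) * log_powr_antideriv s (of_real (real N)))
          \<le> real N * (real N powr - Re s * (ln (real N) * a + b))"
  proof (rule eventually_sequentiallyI[of 1])
    fix N :: nat assume N: "N \<ge> 1"
    have "real (prime_pi (real (N - 1))) \<le> real N"
      using prime_pi_le[of "real (N - 1)"] N by simp
    moreover have "norm (log_powr_antideriv s (of_real (real N))) \<le> real N powr - Re s * (ln (real N) * a + b)"
      using norm_log_powr_antideriv_le[of "real N" s] N \<open>s \<noteq> 0\<close>
      by (simp add: a_def b_def algebra_simps)
    ultimately show "norm (of_nat (prime_pi (real (N - 1))) * log_powr_antideriv s (of_real (real N)))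
        \<le> real N * (real N powr - Re s * (ln (real N) * a + b))"
      unfolding norm_mult norm_of_nat by (intro mult_mono) auto
  qed
qed

lemma tendsto_sum_primes_log_powr_antideriv:
  assumes s: "Re s > 1"
  shows "(\<lambda>N. \<Sum>k<N. if prime k then log_powr_antideriv s (of_real (real k)) else 0)
           \<longlonglongrightarrow> - (prime_zeta s / s\<^sup>2 + prime_log_zeta s / s)"
proof -
  define g where "g k = log_npowr k s / s + npowr k s / s\<^sup>2" for k
  have G: "log_powr_antideriv s (of_nat k) = - g k" if "k > 0" for k
    using that by (simp add: log_powr_antideriv_def g_def log_npowr_def npowr_def field_simps)
  have "(\<lambda>n. g (nth_prime n)) sums (prime_zeta s / s\<^sup>2 + prime_log_zeta s / s)"
  proof -
    have "(\<lambda>n. npowr (nth_prime n) s) sums prime_zeta s"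
      unfolding prime_zeta_def
      by (rule summable_sums[OF summable_norm_cancel[OF summable_norm_npowr[OF Suc_le_nth_prime s]]])
    from sums_add[OF sums_divide[OF prime_log_zeta_sums[OF s], of s] sums_divide[OF this, of "s\<^sup>2"]]
    show ?thesis by (simp add: g_def add.commute)
  qed
  moreover have "summable (\<lambda>n. norm (g (nth_prime n)))"
  proof (rule summable_comparison_test')
    show "summable (\<lambda>n. norm (log_npowr (nth_prime n) s) / norm s + norm (npowr (nth_prime n) s) / (norm s)\<^sup>2)"
      using summable_norm_log_npowr[OF Suc_le_nth_prime s] summable_norm_npowr[OF Suc_le_nth_prime s]
      by (intro summable_add summable_divide)
    show "norm (norm (g (nth_prime n))) \<le> norm (log_npowr (nth_prime n) s) / norm s + norm (npowr (nth_prime n) s) / (norm s)\<^sup>2" for n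
      unfolding g_def by (simp add: norm_divide norm_power order_trans[OF norm_triangle_ineq])
  qed
  ultimately have "((\<lambda>n. g (nth_prime n)) has_sum (prime_zeta s / s\<^sup>2 + prime_log_zeta s / s)) UNIV"
    by (intro norm_summable_imp_has_sum)
  then have "(g has_sum (prime_zeta s / s\<^sup>2 + prime_log_zeta s / s)) {p. prime p}"
    using has_sum_reindex_bij_betw[of nth_prime UNIV "{p. prime p}" g] inj_nth_prime range_nth_prime
    by (simp add: bij_betw_def)
  then have "((\<lambda>k. if prime k then g k else 0) has_sum (prime_zeta s / s\<^sup>2 + prime_log_zeta s / s)) UNIV"
    by (subst has_sum_cong_neutral[where T = "{p. prime p}" and g = g]) auto
  then have "(\<lambda>N. \<Sum>k<N. if prime k then g k else 0) \<longlonglongrightarrow> prime_zeta s / s\<^sup>2 + prime_log_zeta s / s"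
    using has_sum_imp_sums sums_def by blast
  then have "(\<lambda>N. - (\<Sum>k<N. if prime k then g k else 0)) \<longlonglongrightarrow> - (prime_zeta s / s\<^sup>2 + prime_log_zeta s / s)"
    by (rule tendsto_minus)
  moreover have "(\<Sum>k<N. if prime k then log_powr_antideriv s (of_real (real k)) else 0)
      = - (\<Sum>k<N. if prime k then g k else 0)" for N
    unfolding sum_negf[symmetric] by (intro sum.cong refl) (simp add: G prime_gt_0_nat)
  ultimately show ?thesis by (simp only:)
qed

lemma norm_prime_pi_log_integrand_le:
  assumes t: "t \<ge> 2" and s: "Re s > 1"
  shows "norm (prime_pi_log_integrand s t) \<le> 2 / (Re s - 1) * t powr (- (Re s + 1) / 2)"
proof -
  define e where "e = (Re s - 1) / 2"
  have e: "e > 0" using s by (simp add: e_def)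
  have "norm (prime_pi_log_integrand s t) = real (prime_pi t) * ln t / t powr (Re s + 1)"
    unfolding prime_pi_log_integrand_def using t by (simp add: norm_divide norm_mult norm_powr_real_powr)
  also have "\<dots> \<le> t * ln t / t powr (Re s + 1)"
    using prime_pi_le[of t] t by (intro divide_right_mono mult_right_mono) auto
  also have "\<dots> = ln t * t powr - Re s"
    using t by (simp add: powr_add powr_minus field_simps)
  also have "\<dots> \<le> t powr e / e * t powr - Re s"
    using t e by (intro mult_right_mono ln_powr_bound) auto
  also have "\<dots> = 2 / (Re s - 1) * t powr (- (Re s + 1) / 2)"
    by (simp add: e_def powr_add[symmetric] field_simps)
  finally show ?thesis .
qed

lemma integral_prime_pi_log_integrand:
  assumes s: "Re s > 1"
  shows "integral {2..} (prime_pi_log_integrand s) = prime_zeta s / s\<^sup>2 + prime_log_zeta s / s"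
proof -
  have s0: "s \<noteq> 0" using s by auto
  define h where "h t = 2 / (Re s - 1) * t powr (- (Re s + 1) / 2)" for t :: real
  define I where "I N = of_nat (prime_pi (real (N - 1))) * log_powr_antideriv s (of_real (real N))
           - (\<Sum>k<N. if prime k then log_powr_antideriv s (of_real (real k)) else 0)" for N
  define f where "f k t = (if t \<in> {..real k + 2} then prime_pi_log_integrand s t else 0)" for k :: nat and t
  have restrict: "{..real k + 2} \<inter> {2..} = {2..real (k + 2)}" for k by auto
  have "h integrable_on {2..}"
  proof -
    have "- (Re s + 1) / 2 < -1" using s by (simp add: field_simps)
    then have "(\<lambda>t::real. t powr (- (Re s + 1) / 2)) integrable_on {2..}"
      using has_integral_powr_to_inf[of "- (Re s + 1) / 2" 2] by (auto simp: integrable_on_def)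
    then show ?thesis unfolding h_def by (rule integrable_on_mult_right)
  qed
  moreover have "f k integrable_on {2..}" and "integral {2..} (f k) = I (k + 2)" for k
    using has_integral_prime_pi_log_integrand[of "k + 2" s] s0
    unfolding f_def I_def integrable_restrict_Int integral_restrict_Int restrict
    by (auto simp: integrable_on_def integral_unique)
  moreover have "norm (f k t) \<le> h t" if "t \<in> {2..}" for k t
    using norm_prime_pi_log_integrand_le[of t s] that s by (auto simp: f_def h_def)
  moreover have "(\<lambda>k. f k t) \<longlonglongrightarrow> prime_pi_log_integrand s t" for t
  proof (rule tendsto_eventually, rule eventually_sequentiallyI)
    show "f k t = prime_pi_log_integrand s t" if "nat \<lceil>t\<rceil> \<le> k" for k
      using that by (auto simp: f_def)
  qed
  ultimately have "(\<lambda>k. I (k + 2)) \<longlonglongrightarrow> integral {2..} (prime_pi_log_integrand s)"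
    using dominated_convergence(2)[of f "{2..}" h "prime_pi_log_integrand s"] by simp
  moreover have "I \<longlonglongrightarrow> 0 - - (prime_zeta s / s\<^sup>2 + prime_log_zeta s / s)"
    unfolding I_def[abs_def]
    by (intro tendsto_diff tendsto_prime_pi_log_powr_antideriv tendsto_sum_primes_log_powr_antideriv s)
  then have "I \<longlonglongrightarrow> prime_zeta s / s\<^sup>2 + prime_log_zeta s / s" by (simp add: add.commute)
  then have "(\<lambda>k. I (k + 2)) \<longlonglongrightarrow> prime_zeta s / s\<^sup>2 + prime_log_zeta s / s"
    by (rule LIMSEQ_ignore_initial_segment)
  ultimately show ?thesis by (rule LIMSEQ_unique)
qed

section \<open>The slit half plane\<close>

lemma Omega_half_iff: "z \<in> Omega_half \<longleftrightarrow> Re z > 1/2 \<and> \<not> (Im z = 0 \<and> Re z \<le> 1)"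
proof -
  have "z \<in> complex_of_real ` {1/2..1} \<longleftrightarrow> Im z = 0 \<and> 1/2 \<le> Re z \<and> Re z \<le> 1"
    by (auto simp: image_iff complex_eq_iff intro: bexI[of _ "Re z"])
  then show ?thesis unfolding Omega_half_def by auto
qed

lemma open_Omega_half: "open Omega_half"
proof -
  have "closed (complex_of_real ` {1/2..1})"
    by (intro compact_imp_closed compact_continuous_image continuous_on_of_real_id compact_Icc)
  then show ?thesis unfolding Omega_half_def by (intro open_Diff open_halfspace_Re_gt)
qed

lemma starlike_Omega_half: "starlike Omega_half"
  unfolding starlike_def
proof (intro bexI[of _ 2] ballI subsetI)
  fix x y assume x: "x \<in> Omega_half" and "y \<in> closed_segment 2 x"
  then obtain u where u: "0 \<le> u" "u \<le> 1" and y: "y = (1 - u) *\<^sub>R 2 + u *\<^sub>R x"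
    unfolding closed_segment_def by auto
  have rx: "Re x > 1/2" and ix: "Im x = 0 \<Longrightarrow> Re x > 1" using x by (auto simp: Omega_half_iff)
  have "Re y = (1 - u) * 2 + u * Re x" "Im y = u * Im x" using y by auto
  moreover have "(1 - u) * 2 + u * Re x > 1/2"
    using u rx mult_left_mono[of "1/2" "Re x" u] by (cases "u = 1") (auto simp: algebra_simps)
  moreover have "(1 - u) * 2 + u * Re x > 1" if "u \<noteq> 0" "Im x = 0"
  proof -
    have "u * 1 < u * Re x" using u that ix by (intro mult_strict_left_mono) auto
    moreover have "(1 - u) * 2 = 2 - 2 * u" by simp
    ultimately show ?thesis using u by linarith
  qed
  ultimately show "y \<in> Omega_half" by (cases "u = 0") (auto simp: Omega_half_iff)
qed (simp add: Omega_half_iff)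

lemma Omega_half_subset: "Omega_half \<subseteq> {s. Re s > 1/2}" "Omega_half \<subseteq> {s. Re s > 0} - {1}"
  by (auto simp: Omega_half_iff)

lemma halfplane_subset_Omega_half: "{s. Re s > 1} \<subseteq> Omega_half"
  by (auto simp: Omega_half_iff)

lemma holomorphic_zeta_ext_Omega_half:
  shows "zeta_ext holomorphic_on Omega_half" and "deriv zeta_ext holomorphic_on Omega_half"
proof -
  have "open ({s. Re s > 0} - {1})" by (intro open_Diff open_halfspace_Re_gt) auto
  then show "zeta_ext holomorphic_on Omega_half" "deriv zeta_ext holomorphic_on Omega_half"
    using Omega_half_subset(2) holomorphic_zeta_ext holomorphic_deriv[OF holomorphic_zeta_ext]
    by (auto intro: holomorphic_on_subset)
qed

lemma prime_log_zeta_extends_if_zeta_ext_nonzero: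
  assumes nz: "\<And>s. s \<in> Omega_half \<Longrightarrow> zeta_ext s \<noteq> 0"
  shows "\<exists>g. g holomorphic_on Omega_half \<and> (\<forall>s. Re s > 1 \<longrightarrow> g s = prime_log_zeta s)"
proof -
  define g where "g s = - deriv zeta_ext s / zeta_ext s - prime_power_log_zeta s" for s
  have "g holomorphic_on Omega_half"
    unfolding g_def[abs_def] using holomorphic_zeta_ext_Omega_half nz open_Omega_half
    by (intro holomorphic_intros holomorphic_on_subset[OF holomorphic_prime_power_log_zeta Omega_half_subset(1)])
       auto
  moreover have "g s = prime_log_zeta s" if "Re s > 1" for s
    using deriv_zeta_ext[OF that] nz halfplane_subset_Omega_half that by (auto simp: g_def)
  ultimately show ?thesis by blast
qed

lemma zeta_ext_nonzero_if_prime_log_zeta_extends: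
  assumes hg: "g holomorphic_on Omega_half" and eg: "\<And>s. Re s > 1 \<Longrightarrow> g s = prime_log_zeta s"
    and s: "s \<in> Omega_half"
  shows "zeta_ext s \<noteq> 0"
proof -
  define Z where "Z s = g s + prime_power_log_zeta s" for s
  have hZ: "Z holomorphic_on Omega_half"
    unfolding Z_def[abs_def]
    by (intro holomorphic_intros hg holomorphic_on_subset[OF holomorphic_prime_power_log_zeta Omega_half_subset(1)])
  have "deriv zeta_ext z + Z z * zeta_ext z = 0" if "z \<in> Omega_half" for z
  proof (rule analytic_continuation_open[of "{s. Re s > 1}" Omega_half
        "\<lambda>s. deriv zeta_ext s + Z s * zeta_ext s" "\<lambda>_. 0" z])
    show "deriv zeta_ext w + Z w * zeta_ext w = 0" if "w \<in> {s. Re s > 1}" for w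
      using that by (simp add: Z_def deriv_zeta_ext eg)
  qed (use that open_Omega_half starlike_imp_connected[OF starlike_Omega_half] halfplane_subset_Omega_half
        holomorphic_zeta_ext_Omega_half hZ in \<open>auto simp: open_halfspace_Re_gt intro!: holomorphic_intros exI[of _ 2]\<close>)
  moreover have "2 \<in> Omega_half" by (simp add: Omega_half_iff)
  ultimately show ?thesis
    by (intro holomorphic_linear_ode_nonzero[OF open_Omega_half starlike_Omega_half
          holomorphic_zeta_ext_Omega_half(1) hZ _ _ zeta_ext_2_neq_0 s])
qed

text \<open>Off \<open>Omega_half\<close>, the only points with \<open>Re s > 1/2\<close>, \<open>s \<noteq> 1\<close> lie on \<open>(1/2, 1)\<close>, where the
  continuation is negative.\<close>

lemma riemann_zeta_nonzero_iff_zeta_ext_nonzero: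
  "(\<forall>s. Re s > 1/2 \<and> s \<noteq> 1 \<longrightarrow> riemann_zeta s \<noteq> 0) \<longleftrightarrow> (\<forall>s\<in>Omega_half. zeta_ext s \<noteq> 0)"
proof -
  have "riemann_zeta s \<noteq> 0" if "Re s > 1/2" "s \<noteq> 1" "s \<notin> Omega_half" for s
  proof -
    have "s = of_real (Re s)" "Re s < 1"
      using that by (auto simp: Omega_half_iff complex_eq_iff)
    then have "Re (riemann_zeta s) < 0"
      using that riemann_zeta_eq_zeta_ext[of s] Re_zeta_ext_of_real_neg[of "Re s"] by auto
    then show ?thesis by auto
  qed
  moreover have "riemann_zeta s = zeta_ext s" "Re s > 1/2" "s \<noteq> 1" if "s \<in> Omega_half" for s
    using that Omega_half_subset by (auto intro: riemann_zeta_eq_zeta_ext)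
  ultimately show ?thesis by metis
qed

lemma riemann_zeta_nonzero_iff_prime_log_zeta_extends:
  "(\<forall>s. Re s > 1/2 \<and> s \<noteq> 1 \<longrightarrow> riemann_zeta s \<noteq> 0) \<longleftrightarrow>
     (\<exists>g. g holomorphic_on Omega_half \<and> (\<forall>s. Re s > 1 \<longrightarrow> g s = prime_log_zeta s))"
  unfolding riemann_zeta_nonzero_iff_zeta_ext_nonzero
  using prime_log_zeta_extends_if_zeta_ext_nonzero zeta_ext_nonzero_if_prime_log_zeta_extends by metis

lemma deriv_eta_M_extends_iff:
  "(\<forall>M. is_arith_list M \<longrightarrow>
      (\<exists>g. g analytic_on Omega_half \<and> (\<forall>s. Re s > 1 \<longrightarrow> g s = deriv (eta_M M) s))) \<longleftrightarrow>
   (\<exists>g. g holomorphic_on Omega_half \<and> (\<forall>s. Re s > 1 \<longrightarrow> g s = prime_log_zeta s))"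
proof
  assume "\<forall>M. is_arith_list M \<longrightarrow>
      (\<exists>g. g analytic_on Omega_half \<and> (\<forall>s. Re s > 1 \<longrightarrow> g s = deriv (eta_M M) s))"
  moreover have "is_arith_list (arith_list 1 1)" by (auto simp: is_arith_list_def)
  ultimately obtain g where "g analytic_on Omega_half"
    and "\<And>s. Re s > 1 \<Longrightarrow> g s = deriv (eta_M (arith_list 1 1)) s" by blast
  then have "(\<lambda>s. - g s) holomorphic_on Omega_half" "\<And>s. Re s > 1 \<Longrightarrow> - g s = prime_log_zeta s"
    using analytic_on_open[OF open_Omega_half] deriv_eta_M_primes by (auto intro!: holomorphic_intros)
  then show "\<exists>g. g holomorphic_on Omega_half \<and> (\<forall>s. Re s > 1 \<longrightarrow> g s = prime_log_zeta s)" by blast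
next
  assume "\<exists>g. g holomorphic_on Omega_half \<and> (\<forall>s. Re s > 1 \<longrightarrow> g s = prime_log_zeta s)"
  then obtain Q where hQ: "Q holomorphic_on Omega_half" and eQ: "\<And>s. Re s > 1 \<Longrightarrow> Q s = prime_log_zeta s"
    by blast
  show "\<forall>M. is_arith_list M \<longrightarrow>
      (\<exists>g. g analytic_on Omega_half \<and> (\<forall>s. Re s > 1 \<longrightarrow> g s = deriv (eta_M M) s))"
  proof (intro allI impI)
    fix M assume "is_arith_list M"
    then obtain r r0 where r: "r \<ge> 1" and r0: "r0 \<ge> 1" and M: "M = arith_list r r0"
      unfolding is_arith_list_def by blast
    define g where "g s = - (Q s + (\<Sum>j. arith_block_diff r r0 s j) - (\<Sum>n<r0 - 1. log_npowr (nth_prime n) s))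
                          / of_nat r" for s
    have "g holomorphic_on Omega_half"
      unfolding g_def[abs_def] log_npowr_def npowr_def using r
      by (intro holomorphic_intros hQ holomorphic_on_subset[OF holomorphic_suminf_arith_block_diff
          Omega_half_subset(1)]) auto
    then have "g analytic_on Omega_half" by (simp add: analytic_on_open[OF open_Omega_half])
    moreover have "g s = deriv (eta_M M) s" if s: "Re s > 1" for s
      using deriv_eta_M_range[OF inj_arith_prime_seq[OF r] Suc_le_arith_prime_seq[OF r] s]
        arith_prime_seq_log_series_eq[OF r s, of r0] eQ[OF s] r
      by (simp add: M arith_list_eq_range[OF r0] g_def field_simps)
    ultimately show "\<exists>g. g analytic_on Omega_half \<and> (\<forall>s. Re s > 1 \<longrightarrow> g s = deriv (eta_M M) s)"
      by blast
  qed
qed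

lemma prime_pi_integral_extends_if_prime_log_zeta_extends:
  assumes hQ: "Q holomorphic_on Omega_half" and eQ: "\<And>s. Re s > 1 \<Longrightarrow> Q s = prime_log_zeta s"
  shows "\<exists>g. g holomorphic_on Omega_half \<and> (\<forall>s. Re s > 1 \<longrightarrow> g s = integral {2..} (prime_pi_log_integrand s))"
proof -
  have "(\<lambda>s. - Q s) holomorphic_on Omega_half" using hQ by (intro holomorphic_intros)
  moreover have "(prime_zeta has_field_derivative - Q z) (at z)" if "z \<in> {s. Re s > 1}" for z
    using that has_field_derivative_prime_zeta[of z] eQ[of z] by simp
  ultimately obtain P where hP: "P holomorphic_on Omega_half" and eP: "\<forall>z\<in>{s. Re s > 1}. P z = prime_zeta z"
    using holomorphic_primitive_extension[OF open_Omega_half starlike_Omega_half _ open_halfspace_Re_gt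
        convex_connected[OF convex_halfspace_Re_gt] halfplane_subset_Omega_half]
    by blast
  have "(\<lambda>s. P s / s\<^sup>2 + Q s / s) holomorphic_on Omega_half"
    by (intro holomorphic_intros hP hQ) (auto simp: Omega_half_iff)
  moreover have "P s / s\<^sup>2 + Q s / s = integral {2..} (prime_pi_log_integrand s)" if "Re s > 1" for s
    using that eP eQ[OF that] integral_prime_pi_log_integrand[OF that] by simp
  ultimately show ?thesis by blast
qed

text \<open>For \<open>Re s > 1\<close>, \<open>s\<^sup>2 g(s) = P(s) + s Q(s)\<close> with \<open>P' = -Q\<close>, so \<open>(s\<^sup>2 g(s))' / s = Q'(s)\<close>.\<close>

lemma prime_log_zeta_extends_if_prime_pi_integral_extends:
  assumes hg: "g holomorphic_on Omega_half"
    and eg: "\<And>s. Re s > 1 \<Longrightarrow> g s = integral {2..} (prime_pi_log_integrand s)"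
  shows "\<exists>Q. Q holomorphic_on Omega_half \<and> (\<forall>s. Re s > 1 \<longrightarrow> Q s = prime_log_zeta s)"
proof -
  define W where "W s = deriv (\<lambda>s. s\<^sup>2 * g s) s / s" for s
  have hW: "W holomorphic_on Omega_half"
    unfolding W_def[abs_def] using hg
    by (intro holomorphic_intros holomorphic_deriv open_Omega_half) (auto simp: Omega_half_iff)
  have dW: "(prime_log_zeta has_field_derivative W s) (at s)" if "s \<in> {s. Re s > 1}" for s
  proof -
    have s: "Re s > 1" using that by simp
    have dQ: "(prime_log_zeta has_field_derivative deriv prime_log_zeta s) (at s)"
      using holomorphic_derivI[OF holomorphic_prime_log_zeta open_halfspace_Re_gt, of s] s by simp
    have "((\<lambda>s. prime_zeta s + s * prime_log_zeta s) has_field_derivative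
        - prime_log_zeta s + (s * deriv prime_log_zeta s + 1 * prime_log_zeta s)) (at s)"
      by (intro DERIV_add has_field_derivative_prime_zeta s DERIV_mult' DERIV_ident dQ)
    then have D: "((\<lambda>s. prime_zeta s + s * prime_log_zeta s) has_field_derivative
        s * deriv prime_log_zeta s) (at s)" by simp
    have eq: "prime_zeta z + z * prime_log_zeta z = z\<^sup>2 * g z" if "z \<in> {s. Re s > 1}" for z
    proof -
      have "z \<noteq> 0" using that by auto
      moreover have "g z = prime_zeta z / z\<^sup>2 + prime_log_zeta z / z"
        using that eg[of z] integral_prime_pi_log_integrand[of z] by simp
      ultimately show ?thesis by (simp add: field_simps power2_eq_square)
    qed
    have "((\<lambda>s. s\<^sup>2 * g s) has_field_derivative s * deriv prime_log_zeta s) (at s)"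
      by (rule has_field_derivative_transform_within_open[OF D open_halfspace_Re_gt that eq])
    then have "W s = deriv prime_log_zeta s"
      using s by (auto simp: W_def DERIV_imp_deriv)
    then show ?thesis using dQ by simp
  qed
  obtain Q where "Q holomorphic_on Omega_half" "\<forall>z\<in>{s. Re s > 1}. Q z = prime_log_zeta z"
    using holomorphic_primitive_extension[OF open_Omega_half starlike_Omega_half hW open_halfspace_Re_gt
        convex_connected[OF convex_halfspace_Re_gt] halfplane_subset_Omega_half dW] by blast
  then show ?thesis by auto
qed

lemma prime_pi_integral_extends_iff:
  "(\<exists>g. g analytic_on Omega_half \<and> (\<forall>s. Re s > 1 \<longrightarrow> g s = integral {2..}
      (\<lambda>t::real. of_real (real (prime_pi t) * ln t) / of_real t powr (s + 1)))) \<longleftrightarrow>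
   (\<exists>g. g holomorphic_on Omega_half \<and> (\<forall>s. Re s > 1 \<longrightarrow> g s = prime_log_zeta s))"
proof -
  have integrand: "(\<lambda>t::real. of_real (real (prime_pi t) * ln t) / of_real t powr (s + 1))
      = prime_pi_log_integrand s" for s
    by (simp add: prime_pi_log_integrand_def[abs_def])
  show ?thesis
    unfolding integrand analytic_on_open[OF open_Omega_half]
    using prime_pi_integral_extends_if_prime_log_zeta_extends prime_log_zeta_extends_if_prime_pi_integral_extends
    by blast
qed

theorem mainTheorem10:
  shows "((\<forall>s. Re s > 1/2 \<and> s \<noteq> 1 \<longrightarrow> riemann_zeta s \<noteq> 0)
      \<longleftrightarrow> (\<forall>M. is_arith_list M \<longrightarrow>
             (\<exists>g. g analytic_on Omega_half \<and>
                  (\<forall>s. Re s > 1 \<longrightarrow> g s = deriv (eta_M M) s))))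
    \<and> ((\<forall>s. Re s > 1/2 \<and> s \<noteq> 1 \<longrightarrow> riemann_zeta s \<noteq> 0)
      \<longleftrightarrow> (\<exists>g. g analytic_on Omega_half \<and>
             (\<forall>s. Re s > 1 \<longrightarrow> g s = integral {2..}
                (\<lambda>t::real. of_real (real (prime_pi t) * ln t) / of_real t powr (s + 1)))))"
  unfolding riemann_zeta_nonzero_iff_prime_log_zeta_extends deriv_eta_M_extends_iff
    prime_pi_integral_extends_iff
  by blast

end
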